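(* Let $f$ and $\varepsilon_0$ be as in the context and let $0<\alpha<\beta$. Let $(\mu_n)$ be a sequence of $\mathcal F$-invariant probability measures on $\Omega_{\varepsilon_0}\times M$ converging in the weak* topology to $\mu$, and suppose that for $\mu$-a.e. $(\underline\omega,x)$ $$\lim_{n\to+\infty}\frac1n\log\|Df^{n}_{\underline\omega}|_{E^{cs}(\underline\omega,x)}\|<-\beta,\qquad \lim_{n\to+\infty}\frac1n\log\|Df^{-n}_{\underline\omega}|_{E^{cu}(\underline\omega,x)}\|<-\beta .$$ Then $$\lim_{\ell\to+\infty}\liminf_{n\to+\infty}\mu_n(\mathcal B_\ell(\alpha))=1 .$$
   Context: $M$ compact Riemannian manifold, $f$ a $C^2$ diffeomorphism with dominated splitting $TM=E^{cu}\oplus_{\succ}E^{cs}$, with a regular random perturbation (continuous $\omega\mapsto f_\omega\in\mathrm{Diff}^2(M)$ on a metric space $\mathcal T$, $f_{\omega_f}=f$, probabilities $\theta_\varepsilon$ on $\mathcal T$ with nested compact supports shrinking to $\{\omega_f\}$ and absolutely continuous transition probabilities). $\Omega_\varepsilon=\mathrm{supp}(\theta_\varepsilon^{\mathbb Z})$; $\mathcal F(\underline\omega,x)=(\sigma\underline\omega,f_{\omega_0}(x))$, $\sigma$ the left shift; $f^n_{\underline\omega}$ the fibre compositions ($f_{\omega_{n-1}}\circ\cdots\circ f_{\omega_0}$ for $n>0$, $f_{\omega_n}^{-1}\circ\cdots\circ f_{\omega_{-1}}^{-1}$ for $n<0$). There is $\varepsilon_0>0$ and a continuous $\mathcal F$-invariant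 splitting $T_xM=E^{cu}(\underline\omega,x)\oplus E^{cs}(\underline\omega,x)$ on $\Omega_{\varepsilon_0}\times M$. Hyperbolic block $\mathcal B_\ell(\alpha)$: the set of $(\underline\omega,x)\in\Omega_{\varepsilon_0}\times M$ such that for all $n\in\mathbb N$, $\prod_{i=0}^{n-1}\|Df^{\ell}_{\sigma^{i\ell}\underline\omega}|_{E^{cs}(\mathcal F^{i\ell}(\underline\omega,x))}\|\le e^{-\alpha\ell n}$ and $\prod_{i=0}^{n-1}\|Df^{-\ell}_{\sigma^{-i\ell}\underline\omega}|_{E^{cu}(\mathcal F^{-i\ell}(\underline\omega,x))}\|\le e^{-\alpha\ell n}$ (derivatives at the $M$-coordinate of the indicated point). *)

theory Defs
  imports "HOL-Analysis.Analysis" "HOL-Probability.Probability"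
begin

text \<open>
The compact Riemannian manifold M is represented (Nash embedding)
as a compact C2 embedded submanifold of a Euclidean space 'a, with the
Riemannian metric induced by the ambient inner product.
\<close>

definition C2_on :: "'a::euclidean_space set \<Rightarrow> ('a \<Rightarrow> 'b::euclidean_space) \<Rightarrow> bool" where
  "C2_on U g \<longleftrightarrow> open U \<and> (\<exists>g' g''. (\<forall>x\<in>U.
      (g has_derivative blinfun_apply (g' x)) (at x) \<and>
      (g' has_derivative blinfun_apply (g'' x)) (at x)) \<and> continuous_on U g'')"

definition C2_submanifold :: "'a::euclidean_space set \<Rightarrow> bool" where
  "C2_submanifold M \<longleftrightarrow> (\<forall>x\<in>M. \<exists>W (\<Phi>::'a \<Rightarrow> 'a) S. open W \<and> x \<in> W \<and> subspace S \<and>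
      C2_on W \<Phi> \<and> inj_on \<Phi> W \<and> open (\<Phi> ` W) \<and> C2_on (\<Phi> ` W) (inv_into W \<Phi>) \<and>
      \<Phi> ` (M \<inter> W) = \<Phi> ` W \<inter> S)"

definition curve_through :: "'a::euclidean_space set \<Rightarrow> 'a \<Rightarrow> 'a \<Rightarrow> (real \<Rightarrow> 'a) \<Rightarrow> bool" where
  "curve_through M x v \<gamma> \<longleftrightarrow> (\<forall>t. \<gamma> t \<in> M) \<and> \<gamma> 0 = x \<and> (\<gamma> has_vector_derivative v) (at 0)"

definition tangent_space :: "'a::euclidean_space set \<Rightarrow> 'a \<Rightarrow> 'a set" where
  "tangent_space M x = {v. \<exists>\<gamma>. curve_through M x v \<gamma>}"

definition tmap :: "'a::euclidean_space set \<Rightarrow> ('a \<Rightarrow> 'a) \<Rightarrow> 'a \<Rightarrow> 'a \<Rightarrow> 'a" where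
  "tmap M f x v = (THE w. \<forall>\<gamma>. curve_through M x v \<gamma> \<longrightarrow> ((f \<circ> \<gamma>) has_vector_derivative w) (at 0))"

definition opnorm_on :: "('a::euclidean_space \<Rightarrow> 'a) \<Rightarrow> 'a set \<Rightarrow> real" where
  "opnorm_on L E = Sup (insert 0 ((\<lambda>v. norm (L v)) ` {v \<in> E. norm v = 1}))"

definition orth_proj :: "'a::euclidean_space set \<Rightarrow> 'a \<Rightarrow> 'a" where
  "orth_proj E v = (THE w. w \<in> E \<and> (\<forall>u\<in>E. inner (v - w) u = 0))"

definition C2_map :: "'a::euclidean_space set \<Rightarrow> ('a \<Rightarrow> 'a) \<Rightarrow> bool" where
  "C2_map M f \<longleftrightarrow> (\<exists>U g. M \<subseteq> U \<and> C2_on U g \<and> (\<forall>x\<in>M. g x = f x))"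

definition C2_diffeo :: "'a::euclidean_space set \<Rightarrow> ('a \<Rightarrow> 'a) \<Rightarrow> bool" where
  "C2_diffeo M f \<longleftrightarrow> bij_betw f M M \<and> C2_map M f \<and> C2_map M (inv_into M f)"

text \<open>Continuity of a family (\<omega> \<mapsto> f\<omega>) into Diff2(M) with the C2 topology:
  there are C2 extensions to a common open neighbourhood whose values and first two
  derivatives depend jointly continuously on (\<omega>, x).\<close>
definition C2_continuous_family ::
  "'a::euclidean_space set \<Rightarrow> ('w::metric_space \<Rightarrow> 'a \<Rightarrow> 'a) \<Rightarrow> bool" where
  "C2_continuous_family M fam \<longleftrightarrow> (\<exists>U g g' g''. open U \<and> M \<subseteq> U \<and>
     (\<forall>\<omega> x. x \<in> U \<longrightarrow> (g \<omega> has_derivative blinfun_apply (g' \<omega> x)) (at x) \<and>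
                      (g' \<omega> has_derivative blinfun_apply (g'' \<omega> x)) (at x)) \<and>
     continuous_on (UNIV \<times> U) (\<lambda>(\<omega>, x). g \<omega> x) \<and>
     continuous_on (UNIV \<times> U) (\<lambda>(\<omega>, x). g' \<omega> x) \<and>
     continuous_on (UNIV \<times> U) (\<lambda>(\<omega>, x). g'' \<omega> x) \<and>
     (\<forall>\<omega>. \<forall>x\<in>M. g \<omega> x = fam \<omega> x))"

text \<open>Lebesgue (Riemannian volume) null subsets of M: a set A \<subseteq> M is null iff
  a normal tube of some radius around it is Lebesgue-null in the ambient space.\<close>
definition vol_null :: "'a::euclidean_space set \<Rightarrow> 'a set \<Rightarrow> bool" where
  "vol_null M A \<longleftrightarrow> A \<subseteq> M \<and> (\<exists>r>0. {a + n | a n. a \<in> A \<and> norm n < r \<and>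
       (\<forall>u\<in>tangent_space M a. inner n u = 0)} \<in> null_sets lebesgue)"

definition msupport :: "'w::metric_space measure \<Rightarrow> 'w set" where
  "msupport \<theta> = {w. \<forall>r>0. emeasure \<theta> (ball w r) > 0}"

definition regular_random_perturbation ::
  "'a::euclidean_space set \<Rightarrow> ('w::metric_space \<Rightarrow> 'a \<Rightarrow> 'a) \<Rightarrow> 'w \<Rightarrow> (real \<Rightarrow> 'w measure) \<Rightarrow> bool" where
  "regular_random_perturbation M fam \<omega>f \<theta> \<longleftrightarrow>
     (\<forall>\<omega>. C2_diffeo M (fam \<omega>)) \<and>
     C2_continuous_family M fam \<and>
     C2_continuous_family M (\<lambda>\<omega>. inv_into M (fam \<omega>)) \<and>
     (\<forall>\<epsilon>>0. prob_space (\<theta> \<epsilon>) \<and> sets (\<theta> \<epsilon>) = sets borel \<and> compact (msupport (\<theta> \<epsilon>))) \<and>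
     (\<forall>\<epsilon> \<epsilon>'. 0 < \<epsilon> \<and> \<epsilon> \<le> \<epsilon>' \<longrightarrow> msupport (\<theta> \<epsilon>) \<subseteq> msupport (\<theta> \<epsilon>')) \<and>
     (\<Inter>\<epsilon>\<in>{0<..}. msupport (\<theta> \<epsilon>)) = {\<omega>f} \<and>
     (\<forall>\<epsilon>>0. \<forall>x\<in>M. \<forall>A \<in> sets borel. vol_null M A \<longrightarrow>
         emeasure (\<theta> \<epsilon>) {\<omega>. fam \<omega> x \<in> A} = 0)"

text \<open>\<Omega>_\<epsilon> = supp(\<theta>_\<epsilon>^Z) = (supp \<theta>_\<epsilon>)^Z.\<close>
definition Omega :: "(real \<Rightarrow> 'w::metric_space measure) \<Rightarrow> real \<Rightarrow> (int \<Rightarrow> 'w) set" where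
  "Omega \<theta> \<epsilon> = {\<omega>. \<forall>i. \<omega> i \<in> msupport (\<theta> \<epsilon>)}"

definition shift :: "(int \<Rightarrow> 'w) \<Rightarrow> int \<Rightarrow> 'w" where
  "shift \<omega> = (\<lambda>i. \<omega> (i + 1))"

definition shift_inv :: "(int \<Rightarrow> 'w) \<Rightarrow> int \<Rightarrow> 'w" where
  "shift_inv \<omega> = (\<lambda>i. \<omega> (i - 1))"

fun fwd :: "('w \<Rightarrow> 'a \<Rightarrow> 'a) \<Rightarrow> (int \<Rightarrow> 'w) \<Rightarrow> nat \<Rightarrow> 'a \<Rightarrow> 'a" where
  "fwd fam \<omega> 0 = id"
| "fwd fam \<omega> (Suc n) = fam (\<omega> (int n)) \<circ> fwd fam \<omega> n"

fun bwd :: "'a set \<Rightarrow> ('w \<Rightarrow> 'a \<Rightarrow> 'a) \<Rightarrow> (int \<Rightarrow> 'w) \<Rightarrow> nat \<Rightarrow> 'a \<Rightarrow> 'a" where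
  "bwd M fam \<omega> 0 = id"
| "bwd M fam \<omega> (Suc n) = inv_into M (fam (\<omega> (- int (Suc n)))) \<circ> bwd M fam \<omega> n"

definition skew :: "('w \<Rightarrow> 'a \<Rightarrow> 'a) \<Rightarrow> (int \<Rightarrow> 'w) \<times> 'a \<Rightarrow> (int \<Rightarrow> 'w) \<times> 'a" where
  "skew fam p = (shift (fst p), fam (fst p 0) (snd p))"

definition skew_inv :: "'a set \<Rightarrow> ('w \<Rightarrow> 'a \<Rightarrow> 'a) \<Rightarrow> (int \<Rightarrow> 'w) \<times> 'a \<Rightarrow> (int \<Rightarrow> 'w) \<times> 'a" where
  "skew_inv M fam p = (shift_inv (fst p), inv_into M (fam (fst p (-1))) (snd p))"

definition direct_sum_tangent :: "'a::euclidean_space set \<Rightarrow> 'a \<Rightarrow> 'a set \<Rightarrow> 'a set \<Rightarrow> bool" where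
  "direct_sum_tangent M x E1 E2 \<longleftrightarrow> subspace E1 \<and> subspace E2 \<and> E1 \<noteq> {0} \<and> E2 \<noteq> {0} \<and>
     E1 \<inter> E2 = {0} \<and> {u + v | u v. u \<in> E1 \<and> v \<in> E2} = tangent_space M x"

definition dominated_splitting ::
  "'a::euclidean_space set \<Rightarrow> ('a \<Rightarrow> 'a) \<Rightarrow> ('a \<Rightarrow> 'a set) \<Rightarrow> ('a \<Rightarrow> 'a set) \<Rightarrow> bool" where
  "dominated_splitting M f Ecu Ecs \<longleftrightarrow>
     (\<forall>x\<in>M. direct_sum_tangent M x (Ecu x) (Ecs x) \<and>
        tmap M f x ` Ecu x = Ecu (f x) \<and> tmap M f x ` Ecs x = Ecs (f x)) \<and>
     (\<forall>v. continuous_on M (\<lambda>x. orth_proj (Ecu x) v)) \<and>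
     (\<forall>v. continuous_on M (\<lambda>x. orth_proj (Ecs x) v)) \<and>
     (\<exists>C \<kappa>. C > 0 \<and> 0 < \<kappa> \<and> \<kappa> < 1 \<and> (\<forall>x\<in>M. \<forall>n.
        opnorm_on (tmap M (f ^^ n) x) (Ecs x) *
        opnorm_on (tmap M (inv_into M f ^^ n) ((f ^^ n) x)) (Ecu ((f ^^ n) x)) \<le> C * \<kappa> ^ n))"

definition invariant_splitting ::
  "'a::euclidean_space set \<Rightarrow> ('w::metric_space \<Rightarrow> 'a \<Rightarrow> 'a) \<Rightarrow> ((int \<Rightarrow> 'w) \<times> 'a) set \<Rightarrow>
   ((int \<Rightarrow> 'w) \<Rightarrow> 'a \<Rightarrow> 'a set) \<Rightarrow> ((int \<Rightarrow> 'w) \<Rightarrow> 'a \<Rightarrow> 'a set) \<Rightarrow> bool" where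
  "invariant_splitting M fam X Ecu Ecs \<longleftrightarrow>
     (\<forall>(\<omega>, x)\<in>X. direct_sum_tangent M x (Ecu \<omega> x) (Ecs \<omega> x) \<and>
        tmap M (fam (\<omega> 0)) x ` Ecu \<omega> x = Ecu (shift \<omega>) (fam (\<omega> 0) x) \<and>
        tmap M (fam (\<omega> 0)) x ` Ecs \<omega> x = Ecs (shift \<omega>) (fam (\<omega> 0) x)) \<and>
     (\<forall>v. continuous_on X (\<lambda>(\<omega>, x). orth_proj (Ecu \<omega> x) v)) \<and>
     (\<forall>v. continuous_on X (\<lambda>(\<omega>, x). orth_proj (Ecs \<omega> x) v))"

definition hyp_block ::
  "'a::euclidean_space set \<Rightarrow> ('w::metric_space \<Rightarrow> 'a \<Rightarrow> 'a) \<Rightarrow> ((int \<Rightarrow> 'w) \<times> 'a) set \<Rightarrow>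
   ((int \<Rightarrow> 'w) \<Rightarrow> 'a \<Rightarrow> 'a set) \<Rightarrow> ((int \<Rightarrow> 'w) \<Rightarrow> 'a \<Rightarrow> 'a set) \<Rightarrow> nat \<Rightarrow> real \<Rightarrow>
   ((int \<Rightarrow> 'w) \<times> 'a) set" where
  "hyp_block M fam X Ecu Ecs l \<alpha> = {p \<in> X. \<forall>n::nat.
      (\<Prod>i<n. let q = (skew fam ^^ (i * l)) p in
          opnorm_on (tmap M (fwd fam (fst q) l) (snd q)) (Ecs (fst q) (snd q)))
        \<le> exp (- \<alpha> * real l * real n) \<and>
      (\<Prod>i<n. let q = (skew_inv M fam ^^ (i * l)) p in
          opnorm_on (tmap M (bwd M fam (fst q) l) (snd q)) (Ecu (fst q) (snd q)))
        \<le> exp (- \<alpha> * real l * real n)}"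

text \<open>Weak* convergence of probability measures concentrated on a compact set X:
  tested against bounded continuous functions (equivalently C(X), by Tietze).\<close>
definition weak_star_conv :: "(nat \<Rightarrow> 'b::metric_space measure) \<Rightarrow> 'b measure \<Rightarrow> bool" where
  "weak_star_conv \<mu>s \<mu> \<longleftrightarrow> (\<forall>g :: 'b \<Rightarrow> real. continuous_on UNIV g \<and> bounded (range g) \<longrightarrow>
      (\<lambda>n. integral\<^sup>L (\<mu>s n) g) \<longlonglongrightarrow> integral\<^sup>L \<mu> g)"

end

theory Submission
  imports Defs
begin

text \<open>
  Fix l and let c_l p be the norm of Df^l restricted to E^cs at p. For the time-l map of the
  skew product, which preserves every \<mu>_n, a maximal ergodic inequality bounds the \<mu>_n-measure
  of the points at which some partial product of c_l along the orbit exceeds e^(-\<alpha> l m) by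
  C \<mu>_n {c_l \<ge> e^(-\<beta>1 l)}, where \<alpha> < \<beta>1 and C does not depend on l because c_l \<le> K^l.
  As c_l is continuous on the compact phase space, weak* convergence bounds this eventually
  in n by C \<mu> {c_l > e^(-\<beta>2 l)} with \<beta>1 < \<beta>2 < \<beta>, and the hypothesis on the Lyapunov
  exponents makes the latter tend to 0 as l grows (dominated convergence). The same argument
  for E^cu and the inverse skew product bounds the other half of the block condition.
\<close>

section \<open>Orthogonal projections and operator norms on subspaces\<close>

lemma orth_proj_unique:
  fixes E :: "'a::euclidean_space set"
  assumes "subspace E" "w \<in> E" "\<forall>u\<in>E. inner (v - w) u = 0"
  shows "orth_proj E v = w"
  unfolding orth_proj_def
proof (rule the_equality)
  show "w \<in> E \<and> (\<forall>u\<in>E. inner (v - w) u = 0)" using assms(2,3) by blast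
next
  fix w' assume w': "w' \<in> E \<and> (\<forall>u\<in>E. inner (v - w') u = 0)"
  have d: "w' - w \<in> E" using assms w' subspace_diff by blast
  have "inner (w' - w) (w' - w) = inner (v - w) (w' - w) - inner (v - w') (w' - w)"
    by (simp add: algebra_simps inner_diff_left)
  also have "\<dots> = 0" using d assms(3) w' by simp
  finally show "w' = w" by simp
qed

lemma orth_proj_characterization:
  fixes E :: "'a::euclidean_space set"
  assumes "subspace E"
  shows "orth_proj E v \<in> E \<and> (\<forall>u\<in>E. inner (v - orth_proj E v) u = 0)"
proof -
  obtain y z where y: "y \<in> span E" and z: "\<And>w. w \<in> span E \<Longrightarrow> orthogonal z w" and v: "v = y + z"
    using orthogonal_subspace_decomp_exists[of E v] by metis
  have yE: "y \<in> E" using y assms by (metis span_eq_iff)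
  have orth: "\<forall>u\<in>E. inner (v - y) u = 0" using z v by (auto simp: orthogonal_def span_base)
  show ?thesis using orth_proj_unique[OF assms yE orth] yE orth by simp
qed

lemma orth_proj_in: "subspace E \<Longrightarrow> orth_proj E v \<in> E"
  using orth_proj_characterization by blast

lemma orth_proj_orthogonal: "subspace E \<Longrightarrow> u \<in> E \<Longrightarrow> inner (v - orth_proj E v) u = 0"
  using orth_proj_characterization by blast

lemma orth_proj_id: "subspace E \<Longrightarrow> v \<in> E \<Longrightarrow> orth_proj E v = v"
  by (rule orth_proj_unique) auto

lemma linear_orth_proj:
  fixes E :: "'a::euclidean_space set"
  assumes E: "subspace E"
  shows "linear (orth_proj E)"
proof
  fix x y
  show "orth_proj E (x + y) = orth_proj E x + orth_proj E y"
    using orth_proj_orthogonal[OF E, of _ x] orth_proj_orthogonal[OF E, of _ y]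
    by (intro orth_proj_unique[OF E])
       (auto simp: inner_diff_left inner_add_left algebra_simps intro: subspace_add[OF E] orth_proj_in[OF E])
next
  fix c :: real and x
  show "orth_proj E (c *\<^sub>R x) = c *\<^sub>R orth_proj E x"
    using orth_proj_orthogonal[OF E, of _ x]
    by (intro orth_proj_unique[OF E])
       (auto simp: inner_diff_left algebra_simps intro: subspace_scale[OF E] orth_proj_in[OF E])
qed

lemma norm_orth_proj_le:
  fixes E :: "'a::euclidean_space set"
  assumes E: "subspace E"
  shows "norm (orth_proj E v) \<le> norm v"
proof -
  let ?w = "orth_proj E v"
  have "orthogonal ?w (v - ?w)"
    using orth_proj_orthogonal[OF E orth_proj_in[OF E]] unfolding orthogonal_def by (simp add: inner_commute)
  then have "(norm v)\<^sup>2 = (norm ?w)\<^sup>2 + (norm (v - ?w))\<^sup>2"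
    using norm_add_Pythagorean[of ?w "v - ?w"] by simp
  then show ?thesis by (metis abs_norm_cancel le_add_same_cancel1 power2_le_imp_le real_sqrt_abs
        real_sqrt_le_mono zero_le_power2)
qed

definition proj_blinfun :: "'a::euclidean_space set \<Rightarrow> 'a \<Rightarrow>\<^sub>L 'a" where
  "proj_blinfun E = Blinfun (orth_proj E)"

lemma blinfun_apply_proj_blinfun: "subspace E \<Longrightarrow> blinfun_apply (proj_blinfun E) = orth_proj E"
  unfolding proj_blinfun_def
  by (intro bounded_linear_Blinfun_apply linear_conv_bounded_linear[THEN iffD1] linear_orth_proj)

lemma norm_proj_blinfun_le: "subspace E \<Longrightarrow> norm (proj_blinfun E) \<le> 1"
  by (rule norm_blinfun_bound) (auto simp: blinfun_apply_proj_blinfun norm_orth_proj_le)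

lemma opnorm_on_blinfun_bdd_above:
  "bdd_above (insert 0 ((\<lambda>v. norm (blinfun_apply D v)) ` {v \<in> E. norm v = 1}))"
  by (rule bdd_aboveI[where M="norm D"]) (auto intro: order_trans[OF norm_blinfun])

lemma opnorm_on_blinfun_nonneg: "0 \<le> opnorm_on (blinfun_apply D) E"
  unfolding opnorm_on_def by (rule cSup_upper[OF _ opnorm_on_blinfun_bdd_above]) simp

lemma norm_blinfun_le_opnorm_on:
  fixes E :: "'a::euclidean_space set"
  assumes E: "subspace E" and v: "v \<in> E"
  shows "norm (blinfun_apply D v) \<le> opnorm_on (blinfun_apply D) E * norm v"
proof (cases "v = 0")
  case False
  let ?e = "v /\<^sub>R norm v"
  have "?e \<in> E" using v E subspace_scale by blast
  then have "norm (blinfun_apply D ?e) \<le> opnorm_on (blinfun_apply D) E"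
    unfolding opnorm_on_def using False by (intro cSup_upper[OF _ opnorm_on_blinfun_bdd_above]) auto
  moreover have "norm (blinfun_apply D v) = norm v * norm (blinfun_apply D ?e)"
    using False by (simp add: blinfun.scaleR_right)
  ultimately show ?thesis by (metis mult.commute mult_left_mono norm_ge_zero)
qed simp

lemma opnorm_on_eq_norm_blinfun_compose:
  fixes E :: "'a::euclidean_space set"
  assumes E: "subspace E"
  shows "opnorm_on (blinfun_apply D) E = norm (D o\<^sub>L proj_blinfun E)"
proof (rule antisym)
  show "opnorm_on (blinfun_apply D) E \<le> norm (D o\<^sub>L proj_blinfun E)"
    unfolding opnorm_on_def
  proof (rule cSup_least)
    fix x assume "x \<in> insert 0 ((\<lambda>v. norm (blinfun_apply D v)) ` {v \<in> E. norm v = 1})"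
    then consider "x = 0" | v where "v \<in> E" "norm v = 1" "x = norm (blinfun_apply D v)" by auto
    then show "x \<le> norm (D o\<^sub>L proj_blinfun E)"
    proof cases
      case 2
      then have "x = norm (blinfun_apply (D o\<^sub>L proj_blinfun E) v)"
        using E by (simp add: blinfun_apply_proj_blinfun orth_proj_id)
      then show ?thesis using 2 norm_blinfun[of "D o\<^sub>L proj_blinfun E" v] by simp
    qed simp
  qed simp
  show "norm (D o\<^sub>L proj_blinfun E) \<le> opnorm_on (blinfun_apply D) E"
  proof (rule norm_blinfun_bound[OF opnorm_on_blinfun_nonneg])
    fix u
    have "norm (blinfun_apply D (orth_proj E u)) \<le> opnorm_on (blinfun_apply D) E * norm (orth_proj E u)"
      by (rule norm_blinfun_le_opnorm_on[OF E orth_proj_in[OF E]])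
    also have "\<dots> \<le> opnorm_on (blinfun_apply D) E * norm u"
      by (rule mult_left_mono[OF norm_orth_proj_le[OF E] opnorm_on_blinfun_nonneg])
    finally show "norm (blinfun_apply (D o\<^sub>L proj_blinfun E) u) \<le> opnorm_on (blinfun_apply D) E * norm u"
      using E by (simp add: blinfun_apply_proj_blinfun)
  qed
qed

lemma opnorm_on_le_norm_blinfun:
  fixes E :: "'a::euclidean_space set"
  assumes E: "subspace E"
  shows "opnorm_on (blinfun_apply D) E \<le> norm D"
proof -
  have "norm (D o\<^sub>L proj_blinfun E) \<le> norm D * norm (proj_blinfun E)" by (rule norm_blinfun_compose)
  also have "\<dots> \<le> norm D" using norm_proj_blinfun_le[OF E] by (simp add: mult_left_le)
  finally show ?thesis using opnorm_on_eq_norm_blinfun_compose[OF E] by simp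
qed

lemma opnorm_on_cong: "(\<And>v. v \<in> E \<Longrightarrow> L v = L' v) \<Longrightarrow> opnorm_on L E = opnorm_on L' E"
  unfolding opnorm_on_def by (metis (no_types, lifting) image_cong mem_Collect_eq)

lemma continuous_on_proj_blinfun:
  fixes X :: "'p::t2_space set" and E :: "'p \<Rightarrow> 'a::euclidean_space set"
  assumes "\<And>p. p \<in> X \<Longrightarrow> subspace (E p)"
    and "\<And>v. continuous_on X (\<lambda>p. orth_proj (E p) v)"
  shows "continuous_on X (\<lambda>p. proj_blinfun (E p))"
proof -
  have "continuous_on X (\<lambda>p. blinfun_apply (proj_blinfun (E p)) v)" for v
    using assms by (subst continuous_on_cong[OF refl]) (auto simp: blinfun_apply_proj_blinfun)
  then show ?thesis
    unfolding continuous_on_eq_continuous_within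
    by (intro ballI continuous_blinfun_componentwiseI1) blast
qed

section \<open>Compositions along a sequence of symbols\<close>

fun comp_iter :: "('w \<Rightarrow> 'a \<Rightarrow> 'a) \<Rightarrow> (nat \<Rightarrow> int) \<Rightarrow> (int \<Rightarrow> 'w) \<Rightarrow> nat \<Rightarrow> 'a \<Rightarrow> 'a" where
  "comp_iter h idx \<omega> 0 = id"
| "comp_iter h idx \<omega> (Suc n) = h (\<omega> (idx n)) \<circ> comp_iter h idx \<omega> n"

lemma fwd_eq_comp_iter: "fwd fam \<omega> n = comp_iter fam int \<omega> n"
  by (induction n) auto

lemma bwd_eq_comp_iter:
  "bwd M fam \<omega> n = comp_iter (\<lambda>w. inv_into M (fam w)) (\<lambda>i. - int (Suc i)) \<omega> n"
  by (induction n) auto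

definition cocycle_norm ::
  "'a::euclidean_space set \<Rightarrow> ('w \<Rightarrow> 'a \<Rightarrow> 'a) \<Rightarrow> (nat \<Rightarrow> int) \<Rightarrow> ((int \<Rightarrow> 'w) \<times> 'a \<Rightarrow> 'a set) \<Rightarrow>
   nat \<Rightarrow> (int \<Rightarrow> 'w) \<times> 'a \<Rightarrow> real" where
  "cocycle_norm M h idx E n p = opnorm_on (tmap M (comp_iter h idx (fst p) n) (snd p)) (E p)"

locale C1_family =
  fixes M :: "'a::euclidean_space set" and h :: "'w::metric_space \<Rightarrow> 'a \<Rightarrow> 'a"
    and U :: "'a set" and G :: "'w \<Rightarrow> 'a \<Rightarrow> 'a" and G' :: "'w \<Rightarrow> 'a \<Rightarrow> 'a \<Rightarrow>\<^sub>L 'a"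
  assumes maps_to: "y \<in> M \<Longrightarrow> h w y \<in> M"
    and subset: "M \<subseteq> U"
    and has_derivative: "y \<in> U \<Longrightarrow> (G w has_derivative blinfun_apply (G' w y)) (at y)"
    and continuous_G: "continuous_on (UNIV \<times> U) (\<lambda>(w, y). G w y)"
    and continuous_G': "continuous_on (UNIV \<times> U) (\<lambda>(w, y). G' w y)"
    and extends: "y \<in> M \<Longrightarrow> G w y = h w y"
begin

fun comp_iter_deriv :: "(nat \<Rightarrow> int) \<Rightarrow> (int \<Rightarrow> 'w) \<Rightarrow> nat \<Rightarrow> 'a \<Rightarrow> 'a \<Rightarrow>\<^sub>L 'a" where
  "comp_iter_deriv idx \<omega> 0 x = id_blinfun"
| "comp_iter_deriv idx \<omega> (Suc n) x = G' (\<omega> (idx n)) (comp_iter h idx \<omega> n x) o\<^sub>L comp_iter_deriv idx \<omega> n x"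

lemma comp_iter_in: "x \<in> M \<Longrightarrow> comp_iter h idx \<omega> n x \<in> M"
  by (induction n) (auto intro: maps_to)

lemma tmap_comp_iter:
  assumes x: "x \<in> M" and v: "v \<in> tangent_space M x"
  shows "tmap M (comp_iter h idx \<omega> n) x v = comp_iter_deriv idx \<omega> n x v"
proof -
  have chain: "((comp_iter h idx \<omega> n \<circ> \<gamma>) has_vector_derivative comp_iter_deriv idx \<omega> n x v) (at 0)"
    if c: "curve_through M x v \<gamma>" for \<gamma>
  proof (induction n)
    case 0
    then show ?case using c by (simp add: curve_through_def)
  next
    case (Suc n)
    let ?c = "comp_iter h idx \<omega> n \<circ> \<gamma>" and ?w = "\<omega> (idx n)" and ?y = "comp_iter h idx \<omega> n x"
    have inM: "?c t \<in> M" for t using c comp_iter_in by (auto simp: curve_through_def)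
    have "?c 0 = ?y" using c by (simp add: curve_through_def)
    then have "(G ?w has_derivative G' ?w ?y) (at (?c 0) within ?c ` UNIV)"
      using has_derivative[of ?y ?w] inM[of 0] subset by (auto intro: has_derivative_at_withinI)
    then have "((G ?w \<circ> ?c) has_vector_derivative G' ?w ?y (comp_iter_deriv idx \<omega> n x v)) (at 0)"
      by (rule vector_derivative_diff_chain_within[OF Suc])
    moreover have "comp_iter h idx \<omega> (Suc n) \<circ> \<gamma> = G ?w \<circ> ?c"
      using inM extends by (auto simp: fun_eq_iff)
    ultimately show ?case by (simp only: comp_iter.simps comp_iter_deriv.simps blinfun_apply_blinfun_compose)
  qed
  obtain \<gamma> where \<gamma>: "curve_through M x v \<gamma>" using v by (auto simp: tangent_space_def)
  show ?thesis unfolding tmap_def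
    by (rule the_equality) (use chain \<gamma> vector_derivative_unique_at in blast)+
qed

lemma continuous_on_comp_iter:
  "continuous_on (UNIV \<times> M) (\<lambda>p. comp_iter h idx (fst p) n (snd p))"
proof (induction n)
  case (Suc n)
  have "continuous_on (UNIV \<times> M) (\<lambda>p. (fst p (idx n), comp_iter h idx (fst p) n (snd p)))"
    by (intro continuous_on_Pair Suc continuous_on_compose2[OF continuous_on_product_coordinates
          continuous_on_fst]) auto
  then have "continuous_on (UNIV \<times> M) (\<lambda>p. G (fst p (idx n)) (comp_iter h idx (fst p) n (snd p)))"
    using continuous_on_compose2[OF continuous_G] comp_iter_in subset by fastforce
  then show ?case
    by (rule continuous_on_cong[THEN iffD1, OF refl, rotated]) (auto simp: extends comp_iter_in)
qed (simp add: continuous_on_snd)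

lemma continuous_on_comp_iter_deriv:
  "continuous_on (UNIV \<times> M) (\<lambda>p. comp_iter_deriv idx (fst p) n (snd p))"
proof (induction n)
  case (Suc n)
  have "continuous_on (UNIV \<times> M) (\<lambda>p. (fst p (idx n), comp_iter h idx (fst p) n (snd p)))"
    by (intro continuous_on_Pair continuous_on_comp_iter continuous_on_compose2[OF
          continuous_on_product_coordinates continuous_on_fst]) auto
  then have "continuous_on (UNIV \<times> M) (\<lambda>p. G' (fst p (idx n)) (comp_iter h idx (fst p) n (snd p)))"
    using continuous_on_compose2[OF continuous_G'] comp_iter_in subset by fastforce
  then show ?case
    using Suc by (auto intro: bounded_bilinear.continuous_on[OF bounded_bilinear_blinfun_compose])
qed simp

lemma norm_comp_iter_deriv_le:
  assumes "\<And>w y. w \<in> S \<Longrightarrow> y \<in> M \<Longrightarrow> norm (G' w y) \<le> K" "0 \<le> K"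
    and "\<And>i. \<omega> (idx i) \<in> S" and "x \<in> M"
  shows "norm (comp_iter_deriv idx \<omega> n x) \<le> K ^ n"
proof (induction n)
  case (Suc n)
  have "norm (comp_iter_deriv idx \<omega> (Suc n) x)
      \<le> norm (G' (\<omega> (idx n)) (comp_iter h idx \<omega> n x)) * norm (comp_iter_deriv idx \<omega> n x)"
    by (simp add: norm_blinfun_compose)
  also have "\<dots> \<le> K * K ^ n"
    using assms comp_iter_in Suc by (intro mult_mono) auto
  finally show ?case by simp
qed (simp add: norm_blinfun_id_le)

lemma opnorm_tmap_comp_iter_eq:
  assumes "x \<in> M" "subspace E" "E \<subseteq> tangent_space M x"
  shows "opnorm_on (tmap M (comp_iter h idx \<omega> n) x) E
       = norm (comp_iter_deriv idx \<omega> n x o\<^sub>L proj_blinfun E)"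
proof -
  have "opnorm_on (tmap M (comp_iter h idx \<omega> n) x) E = opnorm_on (comp_iter_deriv idx \<omega> n x) E"
    using assms by (intro opnorm_on_cong tmap_comp_iter) auto
  then show ?thesis using opnorm_on_eq_norm_blinfun_compose[OF assms(2)] by simp
qed

lemma continuous_on_cocycle_norm:
  assumes X: "X \<subseteq> UNIV \<times> M"
    and E: "\<And>p. p \<in> X \<Longrightarrow> subspace (E p) \<and> E p \<subseteq> tangent_space M (snd p)"
    and proj: "\<And>v. continuous_on X (\<lambda>p. orth_proj (E p) v)"
  shows "continuous_on X (cocycle_norm M h idx E n)"
proof -
  have "continuous_on X (\<lambda>p. norm (comp_iter_deriv idx (fst p) n (snd p) o\<^sub>L proj_blinfun (E p)))"
    using E proj
    by (intro continuous_on_norm bounded_bilinear.continuous_on[OF bounded_bilinear_blinfun_compose]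
        continuous_on_subset[OF continuous_on_comp_iter_deriv X] continuous_on_proj_blinfun) auto
  then show ?thesis
    using X E by (subst continuous_on_cong[OF refl]) (auto simp: cocycle_norm_def opnorm_tmap_comp_iter_eq)
qed

lemma cocycle_norm_nonneg:
  "snd p \<in> M \<Longrightarrow> subspace (E p) \<Longrightarrow> E p \<subseteq> tangent_space M (snd p) \<Longrightarrow> 0 \<le> cocycle_norm M h idx E n p"
  by (simp add: cocycle_norm_def opnorm_tmap_comp_iter_eq)

lemma cocycle_norm_bound:
  assumes "compact S" "compact M"
  obtains K :: real where "1 \<le> K"
    "\<And>idx E n p. (\<And>i. fst p (idx i) \<in> S) \<Longrightarrow> snd p \<in> M \<Longrightarrow> subspace (E p) \<Longrightarrow>
       E p \<subseteq> tangent_space M (snd p) \<Longrightarrow> cocycle_norm M h idx E n p \<le> K ^ n"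
proof -
  have "compact ((\<lambda>(w, y). G' w y) ` (S \<times> M))"
    using assms subset by (intro compact_continuous_image compact_Times
        continuous_on_subset[OF continuous_G']) auto
  then obtain B where "\<forall>z \<in> (\<lambda>(w, y). G' w y) ` (S \<times> M). norm z \<le> B"
    using compact_imp_bounded bounded_iff by blast
  then have B: "\<And>w y. w \<in> S \<Longrightarrow> y \<in> M \<Longrightarrow> norm (G' w y) \<le> B" by auto
  show ?thesis
  proof (rule that[of "max 1 B"])
    fix idx :: "nat \<Rightarrow> int" and E n p
    assume \<omega>: "\<And>i. fst p (idx i) \<in> S" and x: "snd p \<in> M"
      and E: "subspace (E p)" "E p \<subseteq> tangent_space M (snd p)"
    have "cocycle_norm M h idx E n p \<le> norm (comp_iter_deriv idx (fst p) n (snd p))"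
      using opnorm_on_le_norm_blinfun[OF E(1)] opnorm_tmap_comp_iter_eq[OF x E]
        opnorm_on_eq_norm_blinfun_compose[OF E(1)] by (simp add: cocycle_norm_def)
    also have "\<dots> \<le> max 1 B ^ n"
      using B \<omega> x by (intro norm_comp_iter_deriv_le[where S=S]) (auto intro: le_max_iff_disj[THEN iffD2])
    finally show "cocycle_norm M h idx E n p \<le> max 1 B ^ n" .
  qed simp
qed

end

section \<open>A maximal inequality for products along orbits\<close>

lemma funpow_measurable: "T \<in> measurable N N \<Longrightarrow> T ^^ i \<in> measurable N N"
  by (induction i) (auto intro: measurable_comp)

lemma distr_funpow_eq:
  assumes T: "T \<in> measurable \<nu> \<nu>" and inv: "distr \<nu> \<nu> T = \<nu>"
  shows "distr \<nu> \<nu> (T ^^ l) = \<nu>"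
proof (induction l)
  case (Suc l)
  have "distr \<nu> \<nu> (T ^^ Suc l) = distr (distr \<nu> \<nu> (T ^^ l)) \<nu> T"
    by (simp add: distr_distr[OF T funpow_measurable[OF T]])
  then show ?case using Suc inv by (simp add: comp_def)
qed (simp add: distr_id2 id_def)

definition max_partial_sum :: "('b \<Rightarrow> 'b) \<Rightarrow> ('b \<Rightarrow> real) \<Rightarrow> nat \<Rightarrow> 'b \<Rightarrow> real" where
  "max_partial_sum T \<psi> N p = Max ((\<lambda>k. \<Sum>i<k. \<psi> ((T ^^ i) p)) ` {..N})"

lemma max_partial_sum_ge: "k \<le> N \<Longrightarrow> (\<Sum>i<k. \<psi> ((T ^^ i) p)) \<le> max_partial_sum T \<psi> N p"
  unfolding max_partial_sum_def by (intro Max_ge) auto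

lemma max_partial_sum_attained: "\<exists>k\<le>N. max_partial_sum T \<psi> N p = (\<Sum>i<k. \<psi> ((T ^^ i) p))"
proof -
  have "max_partial_sum T \<psi> N p \<in> (\<lambda>k. \<Sum>i<k. \<psi> ((T ^^ i) p)) ` {..N}"
    unfolding max_partial_sum_def by (rule Max_in) auto
  then show ?thesis by auto
qed

lemma max_partial_sum_nonneg: "0 \<le> max_partial_sum T \<psi> N p"
  using max_partial_sum_ge[of 0 N \<psi> T p] by simp

lemma max_partial_sum_pos_iff:
  "0 < max_partial_sum T \<psi> N p \<longleftrightarrow> (\<exists>k\<le>N. 0 < (\<Sum>i<k. \<psi> ((T ^^ i) p)))"
proof
  assume "0 < max_partial_sum T \<psi> N p"
  then show "\<exists>k\<le>N. 0 < (\<Sum>i<k. \<psi> ((T ^^ i) p))" using max_partial_sum_attained[of N T \<psi> p] by auto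
next
  assume "\<exists>k\<le>N. 0 < (\<Sum>i<k. \<psi> ((T ^^ i) p))"
  then obtain k where "k \<le> N" "0 < (\<Sum>i<k. \<psi> ((T ^^ i) p))" by blast
  then show "0 < max_partial_sum T \<psi> N p" using max_partial_sum_ge[of k N \<psi> T p] by linarith
qed

lemma abs_max_partial_sum_le:
  assumes "\<And>i. \<bar>\<psi> ((T ^^ i) p)\<bar> \<le> C" "0 \<le> C"
  shows "\<bar>max_partial_sum T \<psi> N p\<bar> \<le> real N * C"
proof -
  obtain k where k: "k \<le> N" "max_partial_sum T \<psi> N p = (\<Sum>i<k. \<psi> ((T ^^ i) p))"
    using max_partial_sum_attained[of N T \<psi> p] by meson
  have "\<bar>\<Sum>i<k. \<psi> ((T ^^ i) p)\<bar> \<le> (\<Sum>i<k. \<bar>\<psi> ((T ^^ i) p)\<bar>)" by (rule sum_abs)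
  also have "\<dots> \<le> (\<Sum>i<k. C)" using assms(1) by (intro sum_mono)
  also have "\<dots> \<le> real N * C" using k(1) assms(2) by (simp add: mult_right_mono)
  finally show ?thesis using k(2) by simp
qed

text \<open>A positive maximum is attained at some k \<ge> 1, and dropping the first term of that partial
  sum leaves a partial sum at T p.\<close>
lemma max_partial_sum_step:
  assumes "0 < max_partial_sum T \<psi> N p"
  shows "max_partial_sum T \<psi> N p \<le> \<psi> p + max_partial_sum T \<psi> N (T p)"
proof -
  obtain k where k: "k \<le> N" "max_partial_sum T \<psi> N p = (\<Sum>i<k. \<psi> ((T ^^ i) p))"
    using max_partial_sum_attained[of N T \<psi> p] by meson
  moreover have "k \<noteq> 0"
  proof
    assume "k = 0"
    then show False using assms k(2) by simp
  qed
  ultimately obtain j where j: "k = Suc j" using not0_implies_Suc by blast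
  have "max_partial_sum T \<psi> N p = (\<Sum>i<Suc j. \<psi> ((T ^^ i) p))" using k(2) j by (simp only:)
  also have "\<dots> = \<psi> p + (\<Sum>i<j. \<psi> ((T ^^ i) (T p)))"
    by (subst sum.lessThan_Suc_shift) (simp add: funpow_Suc_right del: funpow.simps)
  also have "\<dots> \<le> \<psi> p + max_partial_sum T \<psi> N (T p)"
    using max_partial_sum_ge[of j N \<psi> T "T p"] k(1) j by simp
  finally show ?thesis .
qed

theorem maximal_ergodic:
  fixes \<nu> :: "'b measure" and T :: "'b \<Rightarrow> 'b" and \<psi> :: "'b \<Rightarrow> real"
  assumes P: "prob_space \<nu>" and T: "T \<in> measurable \<nu> \<nu>" and inv: "distr \<nu> \<nu> T = \<nu>"
    and \<psi>: "\<psi> \<in> borel_measurable \<nu>" and bnd: "\<And>p. p \<in> space \<nu> \<Longrightarrow> \<bar>\<psi> p\<bar> \<le> C"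
  shows "0 \<le> (\<integral>p. indicator {p \<in> space \<nu>. \<exists>k\<le>N. 0 < (\<Sum>i<k. \<psi> ((T ^^ i) p))} p * \<psi> p \<partial>\<nu>)"
proof -
  interpret prob_space \<nu> by (rule P)
  define F where "F = max_partial_sum T \<psi> N"
  define E where "E = {p \<in> space \<nu>. \<exists>k\<le>N. 0 < (\<Sum>i<k. \<psi> ((T ^^ i) p))}"
  obtain p0 where "p0 \<in> space \<nu>" using not_empty by blast
  then have C: "0 \<le> C" using bnd[of p0] by linarith
  have F_bound: "\<bar>F p\<bar> \<le> real N * C" if p: "p \<in> space \<nu>" for p
    using bnd measurable_space[OF funpow_measurable[OF T] p] C unfolding F_def
    by (intro abs_max_partial_sum_le) auto
  have F_meas: "F \<in> borel_measurable \<nu>"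
    unfolding F_def max_partial_sum_def[abs_def]
    by (intro borel_measurable_Max borel_measurable_sum measurable_compose[OF funpow_measurable[OF T] \<psi>]) auto
  have E_eq: "E = {p \<in> space \<nu>. 0 < F p}" by (simp add: E_def F_def max_partial_sum_pos_iff)
  have F_step: "F p - F (T p) \<le> indicator E p * \<psi> p" if p: "p \<in> space \<nu>" for p
  proof (cases "0 < F p")
    case True
    then show ?thesis using max_partial_sum_step[of T \<psi> N p] E_eq p unfolding F_def by simp
  next
    case False
    then have "F p = 0" using max_partial_sum_nonneg[of T \<psi> N p] unfolding F_def by simp
    then show ?thesis using False E_eq max_partial_sum_nonneg[of T \<psi> N "T p"] unfolding F_def by simp
  qed
  have int_F: "integrable \<nu> F"
    by (rule integrable_const_bound[where B="real N * C"]) (use F_bound F_meas in auto)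
  have int_FT: "integrable \<nu> (\<lambda>p. F (T p))"
    by (rule integrable_const_bound[where B="real N * C"])
       (use F_bound measurable_space[OF T] measurable_compose[OF T F_meas] in auto)
  have E_meas: "E \<in> sets \<nu>" unfolding E_eq by (rule borel_measurable_less[OF borel_measurable_const F_meas])
  have int_E: "integrable \<nu> (\<lambda>p. indicator E p * \<psi> p)"
    by (rule integrable_const_bound[where B=C])
       (use bnd C borel_measurable_times[OF borel_measurable_indicator[OF E_meas] \<psi>]
         in \<open>auto simp: indicator_def\<close>)
  have "(\<integral>p. F (T p) \<partial>\<nu>) = (\<integral>p. F p \<partial>distr \<nu> \<nu> T)"
    by (rule integral_distr[symmetric]) (use T F_meas in auto)
  then have "0 = (\<integral>p. F p - F (T p) \<partial>\<nu>)" using inv int_F int_FT by simp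
  also have "\<dots> \<le> (\<integral>p. indicator E p * \<psi> p \<partial>\<nu>)"
    by (rule integral_mono_AE) (use int_F int_FT int_E F_step in auto)
  finally show ?thesis unfolding E_def .
qed

lemma sets_positive_partial_sums:
  fixes \<psi> :: "'b \<Rightarrow> real"
  assumes T: "T \<in> measurable \<nu> \<nu>" and \<psi>: "\<psi> \<in> borel_measurable \<nu>" and K: "countable K"
  shows "{p \<in> space \<nu>. \<exists>k\<in>K. 0 < (\<Sum>i<k. \<psi> ((T ^^ i) p))} \<in> sets \<nu>"
proof -
  have "{p \<in> space \<nu>. \<exists>k\<in>K. 0 < (\<Sum>i<k. \<psi> ((T ^^ i) p))}
      = (\<Union>k\<in>K. {p \<in> space \<nu>. 0 < (\<Sum>i<k. \<psi> ((T ^^ i) p))})" by auto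
  also have "\<dots> \<in> sets \<nu>"
  proof (rule sets.countable_UN''[OF K])
    fix k
    have "(\<lambda>p. \<Sum>i<k. \<psi> ((T ^^ i) p)) \<in> borel_measurable \<nu>"
      by (intro borel_measurable_sum measurable_compose[OF funpow_measurable[OF T] \<psi>])
    then show "{p \<in> space \<nu>. 0 < (\<Sum>i<k. \<psi> ((T ^^ i) p))} \<in> sets \<nu>"
      by (rule borel_measurable_less[OF borel_measurable_const])
  qed
  finally show ?thesis .
qed

lemma measure_positive_partial_sums_le:
  fixes \<nu> :: "'b measure" and T :: "'b \<Rightarrow> 'b" and \<psi> :: "'b \<Rightarrow> real"
  assumes P: "prob_space \<nu>" and T: "T \<in> measurable \<nu> \<nu>" and inv: "distr \<nu> \<nu> T = \<nu>"
    and \<psi>: "\<psi> \<in> borel_measurable \<nu>" and B: "B \<in> sets \<nu>" and d: "0 < d" and h: "0 \<le> h"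
    and \<psi>_le: "\<And>p. p \<in> space \<nu> \<Longrightarrow> - d \<le> \<psi> p \<and> \<psi> p \<le> h"
    and \<psi>_outside: "\<And>p. p \<in> space \<nu> \<Longrightarrow> p \<notin> B \<Longrightarrow> \<psi> p = - d"
  shows "measure \<nu> {p \<in> space \<nu>. \<exists>k\<le>N. 0 < (\<Sum>i<k. \<psi> ((T ^^ i) p))} \<le> (1 + h / d) * measure \<nu> B"
proof -
  interpret prob_space \<nu> by (rule P)
  define E where "E = {p \<in> space \<nu>. \<exists>k\<le>N. 0 < (\<Sum>i<k. \<psi> ((T ^^ i) p))}"
  have E: "E \<in> sets \<nu>"
    using sets_positive_partial_sums[OF T \<psi> countable_finite[OF finite_atMost[of N]]]
    unfolding E_def Bex_def atMost_iff .
  have EB: "E - B \<in> sets \<nu>" using E B by auto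
  have \<psi>_bound: "\<bar>\<psi> p\<bar> \<le> d + \<bar>h\<bar>" if "p \<in> space \<nu>" for p
    using \<psi>_le[OF that] d by linarith
  have int_E: "integrable \<nu> (\<lambda>p. indicator E p * \<psi> p)"
    by (rule integrable_const_bound[where B="d + \<bar>h\<bar>"])
       (use \<psi>_bound d borel_measurable_times[OF borel_measurable_indicator[OF E] \<psi>]
         in \<open>auto simp: indicator_def\<close>)
  have int_B: "integrable \<nu> (\<lambda>p. h * indicator B p - d * indicator (E - B) p :: real)"
    using B EB by (intro Bochner_Integration.integrable_diff integrable_mult_right integrable_real_indicator)
      (auto simp: emeasure_eq_measure)
  have "indicator E p * \<psi> p \<le> h * indicator B p - d * indicator (E - B) p" if "p \<in> space \<nu>" for p
    using \<psi>_le[OF that] \<psi>_outside[OF that] h by (auto simp: indicator_def)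
  then have "(\<integral>p. indicator E p * \<psi> p \<partial>\<nu>) \<le> (\<integral>p. h * indicator B p - d * indicator (E - B) p \<partial>\<nu>)"
    by (intro integral_mono[OF int_E int_B])
  also have "\<dots> = h * measure \<nu> B - d * measure \<nu> (E - B)"
    using B EB by (simp add: emeasure_eq_measure)
  finally have "d * measure \<nu> (E - B) \<le> h * measure \<nu> B"
    using maximal_ergodic[OF P T inv \<psi> \<psi>_bound, of N] unfolding E_def by linarith
  then have "measure \<nu> (E - B) \<le> h / d * measure \<nu> B" using d by (simp add: field_simps)
  moreover have "measure \<nu> E \<le> measure \<nu> (B \<union> (E - B))"
    using B E by (intro finite_measure_mono) auto
  then have "measure \<nu> E \<le> measure \<nu> B + measure \<nu> (E - B)"
    using measure_Un_le[OF B EB] by linarith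
  ultimately show ?thesis unfolding E_def by (simp add: algebra_simps)
qed

lemma measure_some_positive_partial_sum_le:
  fixes \<nu> :: "'b measure" and T :: "'b \<Rightarrow> 'b" and \<psi> :: "'b \<Rightarrow> real"
  assumes P: "prob_space \<nu>" and T: "T \<in> measurable \<nu> \<nu>" and inv: "distr \<nu> \<nu> T = \<nu>"
    and \<psi>: "\<psi> \<in> borel_measurable \<nu>" and B: "B \<in> sets \<nu>" and d: "0 < d" and h: "0 \<le> h"
    and \<psi>_le: "\<And>p. p \<in> space \<nu> \<Longrightarrow> - d \<le> \<psi> p \<and> \<psi> p \<le> h"
    and \<psi>_outside: "\<And>p. p \<in> space \<nu> \<Longrightarrow> p \<notin> B \<Longrightarrow> \<psi> p = - d"
  shows "measure \<nu> {p \<in> space \<nu>. \<exists>k. 0 < (\<Sum>i<k. \<psi> ((T ^^ i) p))} \<le> (1 + h / d) * measure \<nu> B"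
proof -
  interpret prob_space \<nu> by (rule P)
  define E where "E N = {p \<in> space \<nu>. \<exists>k\<le>N. 0 < (\<Sum>i<k. \<psi> ((T ^^ i) p))}" for N
  have E: "E N \<in> sets \<nu>" for N
    using sets_positive_partial_sums[OF T \<psi> countable_finite[OF finite_atMost[of N]]]
    unfolding E_def Bex_def atMost_iff .
  have "(\<lambda>N. measure \<nu> (E N)) \<longlonglongrightarrow> measure \<nu> (\<Union>N. E N)"
  proof (rule finite_Lim_measure_incseq)
    show "incseq E" unfolding incseq_def E_def by (auto intro: order_trans)
  qed (use E in auto)
  moreover have "measure \<nu> (E N) \<le> (1 + h / d) * measure \<nu> B" for N
    unfolding E_def by (rule measure_positive_partial_sums_le[OF P T inv \<psi> B d h \<psi>_le \<psi>_outside])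
  ultimately have "measure \<nu> (\<Union>N. E N) \<le> (1 + h / d) * measure \<nu> B"
    by (intro tendsto_upperbound) auto
  moreover have "(\<Union>N. E N) = {p \<in> space \<nu>. \<exists>k. 0 < (\<Sum>i<k. \<psi> ((T ^^ i) p))}"
    unfolding E_def by auto
  ultimately show ?thesis by simp
qed

lemma sum_pos_of_prod_gt_exp:
  fixes x y :: "nat \<Rightarrow> real"
  assumes "\<And>i. i < n \<Longrightarrow> 0 \<le> x i \<and> x i \<le> exp (y i - a)" and "exp (- a * real n) < (\<Prod>i<n. x i)"
  shows "0 < (\<Sum>i<n. y i)"
proof -
  have "(\<Prod>i<n. x i) \<le> (\<Prod>i<n. exp (y i - a))" using assms(1) by (intro prod_mono) auto
  also have "\<dots> = exp ((\<Sum>i<n. y i) - a * real n)" by (simp add: exp_sum[symmetric] sum_subtractf)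
  finally have "exp (- a * real n) < exp ((\<Sum>i<n. y i) - a * real n)" using assms(2) by linarith
  then show ?thesis by simp
qed

text \<open>The maximal inequality applied to \<psi> = ln (max c e^-b) + a: a partial product
  exceeding e^-an makes a partial sum of \<psi> positive.\<close>
theorem measure_orbit_product_exceeds_le:
  fixes \<nu> :: "'b measure" and T :: "'b \<Rightarrow> 'b" and c :: "'b \<Rightarrow> real"
  assumes P: "prob_space \<nu>" and T: "T \<in> measurable \<nu> \<nu>" and inv: "distr \<nu> \<nu> T = \<nu>"
    and c: "c \<in> borel_measurable \<nu>" "\<And>p. p \<in> space \<nu> \<Longrightarrow> 0 \<le> c p \<and> c p \<le> C"
    and C: "1 \<le> C" and ab: "0 < a" "a < b"
  shows "measure \<nu> {p \<in> space \<nu>. \<exists>n. exp (- a * real n) < (\<Prod>i<n. c ((T ^^ i) p))}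
         \<le> (1 + (ln C + a) / (b - a)) * measure \<nu> {p \<in> space \<nu>. exp (- b) \<le> c p}"
proof -
  interpret prob_space \<nu> by (rule P)
  define \<psi> where "\<psi> p = ln (max (c p) (exp (- b))) + a" for p
  define B where "B = {p \<in> space \<nu>. exp (- b) \<le> c p}"
  have \<psi>: "\<psi> \<in> borel_measurable \<nu>" unfolding \<psi>_def using c(1) by measurable
  have B: "B \<in> sets \<nu>" unfolding B_def using c(1) by measurable
  have \<psi>_le: "- (b - a) \<le> \<psi> p \<and> \<psi> p \<le> ln C + a" if "p \<in> space \<nu>" for p
  proof -
    have "exp (- b) \<le> C" using C ab by (smt (verit) exp_le_one_iff)
    then show ?thesis unfolding \<psi>_def using c(2)[OF that] C
      by (auto simp: ln_ge_iff ln_le_cancel_iff less_max_iff_disj)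
  qed
  have \<psi>_outside: "\<psi> p = - (b - a)" if "p \<in> space \<nu>" "p \<notin> B" for p
  proof -
    have "max (c p) (exp (- b)) = exp (- b)" using that unfolding B_def by auto
    then show ?thesis unfolding \<psi>_def by simp
  qed
  have c_le_exp_\<psi>: "c p \<le> exp (\<psi> p - a)" for p
  proof -
    have "exp (\<psi> p - a) = max (c p) (exp (- b))" unfolding \<psi>_def by (simp add: exp_ln less_max_iff_disj)
    then show ?thesis by simp
  qed
  have "{p \<in> space \<nu>. \<exists>n. exp (- a * real n) < (\<Prod>i<n. c ((T ^^ i) p))}
      \<subseteq> {p \<in> space \<nu>. \<exists>k. 0 < (\<Sum>i<k. \<psi> ((T ^^ i) p))}"
  proof clarify
    fix p n assume p: "p \<in> space \<nu>" and n: "exp (- a * real n) < (\<Prod>i<n. c ((T ^^ i) p))"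
    have "0 < (\<Sum>i<n. \<psi> ((T ^^ i) p))"
      using c(2) measurable_space[OF funpow_measurable[OF T] p] c_le_exp_\<psi>
      by (intro sum_pos_of_prod_gt_exp[OF _ n]) auto
    then show "\<exists>k. 0 < (\<Sum>i<k. \<psi> ((T ^^ i) p))" by blast
  qed
  then have "measure \<nu> {p \<in> space \<nu>. \<exists>n. exp (- a * real n) < (\<Prod>i<n. c ((T ^^ i) p))}
      \<le> measure \<nu> {p \<in> space \<nu>. \<exists>k. 0 < (\<Sum>i<k. \<psi> ((T ^^ i) p))}"
    using sets_positive_partial_sums[OF T \<psi> countableI_type[of UNIV]] by (intro finite_measure_mono) simp_all
  also have "\<dots> \<le> (1 + (ln C + a) / (b - a)) * measure \<nu> B"
    using measure_some_positive_partial_sum_le[OF P T inv \<psi> B _ _ \<psi>_le \<psi>_outside] ab C by simp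
  finally show ?thesis unfolding B_def .
qed

section \<open>Invariant measures converging weakly* on a closed set\<close>

lemma closed_superlevel_on_closed:
  "closed X \<Longrightarrow> continuous_on X c \<Longrightarrow> closed {p \<in> X. e \<le> (c p :: real)}"
  using continuous_closed_preimage[of X c "{e..}"] by (simp add: vimage_def Int_def conj_commute)

lemma sets_strict_superlevel_on_closed:
  assumes "closed X" "continuous_on X c"
  shows "{p \<in> X. e < (c p :: real)} \<in> sets borel"
proof -
  have "closed (X \<inter> c -` {..e})"
    using continuous_closed_preimage[OF assms(2,1)] by simp
  then have "X - X \<inter> c -` {..e} \<in> sets borel" using assms(1) by auto
  moreover have "{p \<in> X. e < c p} = X - X \<inter> c -` {..e}" by auto
  ultimately show ?thesis by simp
qed

lemma sets_preimage_Int_closed: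
  assumes "closed X" "continuous_on X T" "A \<in> sets borel"
  shows "T -` A \<inter> X \<in> sets borel"
proof -
  define T' where "T' p = (if p \<in> X then T p else undefined)" for p
  have T': "T' \<in> borel_measurable borel"
    unfolding T'_def using assms(1,2) by (intro borel_measurable_continuous_on_if) auto
  have "T' -` A \<in> sets borel" using measurable_sets[OF T' assms(3)] by (simp add: space_borel)
  then have "T' -` A \<inter> X \<in> sets borel" using assms(1) by auto
  moreover have "T' -` A \<inter> X = T -` A \<inter> X" by (auto simp: T'_def)
  ultimately show ?thesis by simp
qed

definition block_violation ::
  "('b \<Rightarrow> 'b) \<Rightarrow> (nat \<Rightarrow> 'b \<Rightarrow> real) \<Rightarrow> 'b set \<Rightarrow> nat \<Rightarrow> real \<Rightarrow> 'b set" where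
  "block_violation T c X l \<alpha> = {p \<in> X. \<exists>m. exp (- \<alpha> * real l * real m) < (\<Prod>i<m. c l ((T ^^ (i * l)) p))}"

lemma continuous_on_funpow:
  assumes "continuous_on X T" "T ` X \<subseteq> X"
  shows "continuous_on X (T ^^ k) \<and> (T ^^ k) ` X \<subseteq> X"
proof (induction k)
  case (Suc k)
  then show ?case using assms by (auto intro: continuous_on_compose2)
qed simp

lemma sets_block_violation:
  assumes X: "closed X" and T: "continuous_on X T" "T ` X \<subseteq> X" and c: "continuous_on X (c l)"
  shows "block_violation T c X l \<alpha> \<in> sets borel"
proof -
  have "continuous_on X (\<lambda>p. \<Prod>i<m. c l ((T ^^ (i * l)) p))" for m
    using continuous_on_funpow[OF T] c by (intro continuous_on_prod) (auto intro: continuous_on_compose2)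
  then have "{p \<in> X. exp (- \<alpha> * real l * real m) < (\<Prod>i<m. c l ((T ^^ (i * l)) p))} \<in> sets borel" for m
    by (rule sets_strict_superlevel_on_closed[OF X])
  then have "(\<Union>m. {p \<in> X. exp (- \<alpha> * real l * real m) < (\<Prod>i<m. c l ((T ^^ (i * l)) p))}) \<in> sets borel"
    by blast
  moreover have "block_violation T c X l \<alpha>
      = (\<Union>m. {p \<in> X. exp (- \<alpha> * real l * real m) < (\<Prod>i<m. c l ((T ^^ (i * l)) p))})"
    unfolding block_violation_def by blast
  ultimately show ?thesis by simp
qed

lemma tendsto_liminf_1:
  fixes u :: "nat \<Rightarrow> nat \<Rightarrow> ennreal"
  assumes le_1: "\<And>l n. u l n \<le> 1"
    and almost_1: "\<And>\<delta>. 0 < \<delta> \<Longrightarrow> \<forall>\<^sub>F l in sequentially. \<forall>\<^sub>F n in sequentially. ennreal (1 - \<delta>) \<le> u l n"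
  shows "(\<lambda>l. liminf (u l)) \<longlonglongrightarrow> 1"
proof (rule order_tendstoI)
  fix y :: ennreal assume "y < 1"
  moreover have "y \<noteq> top" using \<open>y < 1\<close> by auto
  ultimately obtain r where r: "y = ennreal r" "0 \<le> r" "r < 1"
    by (cases y) (auto simp: ennreal_less_iff)
  have "\<forall>\<^sub>F l in sequentially. ennreal (1 - (1 - r) / 2) \<le> liminf (u l)"
    using almost_1[of "(1 - r) / 2"] r by (auto elim!: eventually_mono intro: Liminf_bounded)
  then show "\<forall>\<^sub>F l in sequentially. y < liminf (u l)"
  proof (rule eventually_mono)
    fix l assume "ennreal (1 - (1 - r) / 2) \<le> liminf (u l)"
    moreover have "y < ennreal (1 - (1 - r) / 2)" using r by (simp add: ennreal_lessI field_simps)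
    ultimately show "y < liminf (u l)" by (rule less_le_trans[rotated])
  qed
next
  fix y :: ennreal assume "1 < y"
  have "liminf (u l) \<le> 1" for l
  proof -
    have "liminf (u l) \<le> limsup (u l)" by (rule Liminf_le_Limsup) simp
    also have "\<dots> \<le> 1" by (rule Limsup_bounded) (simp add: le_1)
    finally show ?thesis .
  qed
  then show "\<forall>\<^sub>F l in sequentially. liminf (u l) < y"
    using \<open>1 < y\<close> by (intro always_eventually allI) (rule le_less_trans)
qed

lemma eventually_le_exp_of_ln_rate:
  fixes x :: "nat \<Rightarrow> real"
  assumes L: "(\<lambda>n. ln (x n) / real n) \<longlonglongrightarrow> L" and less: "L < - \<beta>"
  shows "\<forall>\<^sub>F l in sequentially. x l \<le> exp (- (\<beta> * real l))"
proof -
  have "\<forall>\<^sub>F l in sequentially. ln (x l) / real l < - \<beta>"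
    using less by (intro order_tendstoD(2)[OF L])
  then show ?thesis using eventually_gt_at_top[of 0]
  proof eventually_elim
    case (elim l)
    show ?case
    proof (rule ccontr)
      assume "\<not> x l \<le> exp (- (\<beta> * real l))"
      then have "- (\<beta> * real l) < ln (x l)"
        using exp_gt_zero less_trans ln_less_cancel_iff by (metis ln_exp not_le)
      then show False using elim by (simp add: field_simps)
    qed
  qed
qed

lemma measure_le_integral_of_indicator_le:
  assumes "prob_space M" "A \<in> sets M" "u \<in> borel_measurable M" "\<And>p. 0 \<le> u p \<and> u p \<le> 1"
    and "AE p in M. indicator A p \<le> u p"
  shows "measure M A \<le> integral\<^sup>L M u"
proof -
  interpret prob_space M by fact
  have "measure M A = integral\<^sup>L M (indicator A)" using assms(2) by simp
  also have "\<dots> \<le> integral\<^sup>L M u"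
    using assms by (intro integral_mono_AE integrable_const_bound[where B=1])
      (auto simp: emeasure_eq_measure)
  finally show ?thesis .
qed

lemma integral_le_measure_of_le_indicator:
  assumes "prob_space M" "A \<in> sets M" "u \<in> borel_measurable M" "\<And>p. 0 \<le> u p \<and> u p \<le> 1"
    and "AE p in M. u p \<le> indicator A p"
  shows "integral\<^sup>L M u \<le> measure M A"
proof -
  interpret prob_space M by fact
  have "integral\<^sup>L M u \<le> integral\<^sup>L M (indicator A)"
    using assms by (intro integral_mono_AE integrable_const_bound[where B=1])
      (auto simp: emeasure_eq_measure)
  also have "\<dots> = measure M A" using assms(2) by simp
  finally show ?thesis .
qed

locale weak_star_on_closed =
  fixes X :: "'b::metric_space set" and \<mu>s :: "nat \<Rightarrow> 'b measure" and \<mu> :: "'b measure"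
  assumes closed_X: "closed X"
    and prob_\<mu>s: "prob_space (\<mu>s n)" and sets_\<mu>s: "sets (\<mu>s n) = sets borel"
    and \<mu>s_X: "emeasure (\<mu>s n) X = 1"
    and prob_\<mu>: "prob_space \<mu>" and sets_\<mu>: "sets \<mu> = sets borel" and \<mu>_X: "emeasure \<mu> X = 1"
    and weak_star: "weak_star_conv \<mu>s \<mu>"
begin

lemma X_borel: "X \<in> sets borel"
  using closed_X by simp

lemma space_\<mu>s: "space (\<mu>s n) = UNIV"
  using sets_eq_imp_space_eq[OF sets_\<mu>s] by simp

lemma AE_\<mu>s_X: "AE p in \<mu>s n. p \<in> X"
proof -
  interpret prob_space "\<mu>s n" by (rule prob_\<mu>s)
  show ?thesis using AE_in_set_eq_1[of X] \<mu>s_X[of n] X_borel sets_\<mu>s by (simp add: emeasure_eq_measure)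
qed

lemma AE_\<mu>_X: "AE p in \<mu>. p \<in> X"
proof -
  interpret prob_space \<mu> by (rule prob_\<mu>)
  show ?thesis using AE_in_set_eq_1 \<mu>_X X_borel sets_\<mu> by (simp add: emeasure_eq_measure)
qed

lemma emeasure_\<mu>s_Int_X:
  assumes "A \<in> sets borel"
  shows "emeasure (\<mu>s n) (A \<inter> X) = emeasure (\<mu>s n) A"
proof (rule emeasure_eq_AE)
  show "AE p in \<mu>s n. p \<in> A \<inter> X \<longleftrightarrow> p \<in> A" using AE_\<mu>s_X[of n] by eventually_elim auto
qed (use assms X_borel sets_\<mu>s in auto)

text \<open>Weak* convergence only gives upper semicontinuity on closed sets, so the threshold
  drops from e1 to e2: an Urysohn function separates the two superlevel sets.\<close>
lemma eventually_measure_superlevel_less: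
  fixes c :: "'b \<Rightarrow> real"
  assumes c: "continuous_on X c" and e: "e2 < e1" and \<eta>: "0 < \<eta>"
  shows "\<forall>\<^sub>F n in sequentially. measure (\<mu>s n) {p \<in> X. e1 \<le> c p} < measure \<mu> {p \<in> X. e2 < c p} + \<eta>"
proof -
  let ?A1 = "{p \<in> X. e1 \<le> c p}" and ?A2 = "{p \<in> X. e2 < c p}"
  have closed_below: "closed (X \<inter> c -` {..e2})" using continuous_closed_preimage[OF c closed_X] by simp
  obtain u where u: "continuous_map euclidean (top_of_set {0..1}) u"
    "u ` (X \<inter> c -` {..e2}) \<subseteq> {0::real}" "u ` ?A1 \<subseteq> {1}"
    by (rule Urysohn_lemma[of euclidean "X \<inter> c -` {..e2}" ?A1 0 1])
       (use e closed_below closed_superlevel_on_closed[OF closed_X c, of e1]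
         in \<open>auto simp: metrizable_imp_normal_space metrizable_space_euclidean disjnt_def\<close>)
  have u_cont: "continuous_on UNIV u" and u01: "\<And>p. 0 \<le> u p \<and> u p \<le> 1"
    using u(1) by (auto simp: continuous_map_in_subtopology)
  have u_meas: "u \<in> borel_measurable borel" using u_cont by (rule borel_measurable_continuous_onI)
  have A1: "?A1 \<in> sets borel" using closed_superlevel_on_closed[OF closed_X c] by simp
  have A2: "?A2 \<in> sets borel" by (rule sets_strict_superlevel_on_closed[OF closed_X c])
  have "measure (\<mu>s n) ?A1 \<le> integral\<^sup>L (\<mu>s n) u" for n
    using A1 sets_\<mu>s u01 u(3) u_meas measurable_cong_sets[OF sets_\<mu>s[of n] refl[of "sets (borel::real measure)"]]
    by (intro measure_le_integral_of_indicator_le[OF prob_\<mu>s] AE_I2) (auto simp: indicator_def image_subset_iff)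
  moreover have "integral\<^sup>L \<mu> u \<le> measure \<mu> ?A2"
  proof (rule integral_le_measure_of_le_indicator[OF prob_\<mu>])
    show "AE p in \<mu>. u p \<le> indicator ?A2 p"
      using AE_\<mu>_X by eventually_elim (use u01 u(2) in \<open>force simp: indicator_def not_less\<close>)
  qed (use A2 sets_\<mu> u01 u_meas measurable_cong_sets[OF sets_\<mu> refl[of "sets (borel::real measure)"]] in auto)
  moreover have "\<forall>\<^sub>F n in sequentially. integral\<^sup>L (\<mu>s n) u < integral\<^sup>L \<mu> u + \<eta>"
    using weak_star u_cont u01 \<eta> unfolding weak_star_conv_def
    by (intro order_tendstoD(2)) (auto intro!: boundedI[where B=1])
  ultimately show ?thesis by (elim eventually_mono) (smt (verit))
qed

lemma measure_superlevel_tendsto_zero: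
  fixes c :: "nat \<Rightarrow> 'b \<Rightarrow> real"
  assumes c: "\<And>l. continuous_on X (c l)"
    and lyap: "AE p in \<mu>. p \<in> X \<longrightarrow> (\<exists>L. L < - \<beta> \<and> (\<lambda>n. ln (c n p) / real n) \<longlonglongrightarrow> L)"
    and \<beta>': "\<beta>' < \<beta>"
  shows "(\<lambda>l. measure \<mu> {p \<in> X. exp (- (\<beta>' * real l)) < c l p}) \<longlonglongrightarrow> 0"
proof -
  interpret prob_space \<mu> by (rule prob_\<mu>)
  define B where "B l = {p \<in> X. exp (- (\<beta>' * real l)) < c l p}" for l
  have B: "B l \<in> sets \<mu>" for l
    unfolding B_def using sets_strict_superlevel_on_closed[OF closed_X c] sets_\<mu> by simp
  have "(\<lambda>l. integral\<^sup>L \<mu> (indicator (B l) :: 'b \<Rightarrow> real)) \<longlonglongrightarrow> integral\<^sup>L \<mu> (\<lambda>p. 0 :: real)"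
  proof (rule integral_dominated_convergence[where w="\<lambda>_. 1"])
    show "AE p in \<mu>. (\<lambda>l. indicator (B l) p :: real) \<longlonglongrightarrow> 0"
      using lyap
    proof eventually_elim
      case (elim p)
      show ?case
      proof (cases "p \<in> X")
        case True
        then obtain L where "L < - \<beta>" "(\<lambda>n. ln (c n p) / real n) \<longlonglongrightarrow> L" using elim by blast
        then have "\<forall>\<^sub>F l in sequentially. c l p \<le> exp (- (\<beta>' * real l))"
          using \<beta>' by (intro eventually_le_exp_of_ln_rate) auto
        then show ?thesis by (intro tendsto_eventually) (auto elim!: eventually_mono simp: B_def)
      qed (simp add: B_def)
    qed
  qed (use B in \<open>auto simp: indicator_def\<close>)
  then show ?thesis using B by (simp add: B_def emeasure_eq_measure)
qed

lemma emeasure_diff_Un_ge: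
  assumes A: "A \<in> sets borel" and B: "B \<in> sets borel"
  shows "ennreal (1 - measure (\<mu>s n) A - measure (\<mu>s n) B) \<le> emeasure (\<mu>s n) (X - (A \<union> B))"
proof -
  interpret prob_space "\<mu>s n" by (rule prob_\<mu>s)
  have sets: "A \<in> events" "B \<in> events" "X \<in> events" using A B X_borel sets_\<mu>s by auto
  have "measure (\<mu>s n) X \<le> measure (\<mu>s n) ((X - (A \<union> B)) \<union> (A \<union> B))"
    using sets by (intro finite_measure_mono) auto
  also have "\<dots> \<le> measure (\<mu>s n) (X - (A \<union> B)) + measure (\<mu>s n) (A \<union> B)"
    using sets by (intro measure_Un_le) auto
  finally have "1 - measure (\<mu>s n) (A \<union> B) \<le> measure (\<mu>s n) (X - (A \<union> B))"
    using \<mu>s_X[of n] by (simp add: emeasure_eq_measure)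
  moreover have "measure (\<mu>s n) (A \<union> B) \<le> measure (\<mu>s n) A + measure (\<mu>s n) B"
    using sets(1,2) by (rule measure_Un_le)
  ultimately show ?thesis by (simp add: emeasure_eq_measure ennreal_leI)
qed

text \<open>Off X the skew product need not even be measurable, hence the extension by the identity.\<close>
lemma invariant_extension:
  assumes T: "continuous_on X T" "T ` X \<subseteq> X"
    and inv: "\<And>A. A \<in> sets borel \<Longrightarrow> emeasure (\<mu>s n) (T -` A \<inter> X) = emeasure (\<mu>s n) A"
  shows "(\<lambda>p. if p \<in> X then T p else p) \<in> measurable (\<mu>s n) (\<mu>s n)"
    and "distr (\<mu>s n) (\<mu>s n) (\<lambda>p. if p \<in> X then T p else p) = \<mu>s n"
proof -
  let ?T = "\<lambda>p. if p \<in> X then T p else p"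
  have "?T \<in> borel_measurable borel"
    using closed_X T(1) by (intro borel_measurable_continuous_on_if continuous_on_id) auto
  then show meas: "?T \<in> measurable (\<mu>s n) (\<mu>s n)"
    using measurable_cong_sets[OF sets_\<mu>s sets_\<mu>s] by simp
  show "distr (\<mu>s n) (\<mu>s n) ?T = \<mu>s n"
  proof (rule measure_eqI)
    fix A assume "A \<in> sets (distr (\<mu>s n) (\<mu>s n) ?T)"
    then have A: "A \<in> sets borel" using sets_\<mu>s by simp
    have "emeasure (distr (\<mu>s n) (\<mu>s n) ?T) A = emeasure (\<mu>s n) (?T -` A)"
      using A sets_\<mu>s by (simp add: emeasure_distr[OF meas] space_\<mu>s)
    also have "\<dots> = emeasure (\<mu>s n) (T -` A \<inter> X)"
    proof (rule emeasure_eq_AE)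
      show "AE p in \<mu>s n. p \<in> ?T -` A \<longleftrightarrow> p \<in> T -` A \<inter> X" using AE_\<mu>s_X[of n] by eventually_elim auto
    qed (use measurable_sets[OF meas, of A] sets_preimage_Int_closed[OF closed_X T(1) A] A sets_\<mu>s
        in \<open>auto simp: space_\<mu>s\<close>)
    finally show "emeasure (distr (\<mu>s n) (\<mu>s n) ?T) A = emeasure (\<mu>s n) A" using inv[OF A] by simp
  qed simp
qed

lemma invariant_left_inverse:
  assumes S: "continuous_on X S" and T: "T ` X \<subseteq> X" and ST: "\<And>p. p \<in> X \<Longrightarrow> S (T p) = p"
    and inv: "\<And>A. A \<in> sets borel \<Longrightarrow> emeasure (\<mu>s n) (T -` A \<inter> X) = emeasure (\<mu>s n) A"
    and A: "A \<in> sets borel"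
  shows "emeasure (\<mu>s n) (S -` A \<inter> X) = emeasure (\<mu>s n) A"
proof -
  have "T -` (S -` A \<inter> X) \<inter> X = A \<inter> X" using T ST by auto
  then have "emeasure (\<mu>s n) (S -` A \<inter> X) = emeasure (\<mu>s n) (A \<inter> X)"
    using inv[OF sets_preimage_Int_closed[OF closed_X S A]] by simp
  then show ?thesis using emeasure_\<mu>s_Int_X[OF A] by simp
qed

lemma measure_orbit_product_exceeds_le_on:
  fixes T :: "'b \<Rightarrow> 'b" and c :: "'b \<Rightarrow> real"
  assumes T: "continuous_on X T" "T ` X \<subseteq> X"
    and inv: "\<And>A. A \<in> sets borel \<Longrightarrow> emeasure (\<mu>s n) (T -` A \<inter> X) = emeasure (\<mu>s n) A"
    and c: "continuous_on X c" "\<And>p. p \<in> X \<Longrightarrow> 0 \<le> c p \<and> c p \<le> C"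
    and C: "1 \<le> C" and ab: "0 < a" "a < b"
  shows "measure (\<mu>s n) {p \<in> X. \<exists>m. exp (- a * real m) < (\<Prod>i<m. c ((T ^^ (i * l)) p))}
       \<le> (1 + (ln C + a) / (b - a)) * measure (\<mu>s n) {p \<in> X. exp (- b) \<le> c p}"
proof -
  define T' where "T' p = (if p \<in> X then T p else p)" for p
  define c' where "c' p = (if p \<in> X then c p else 0)" for p
  have T': "T' \<in> measurable (\<mu>s n) (\<mu>s n)" "distr (\<mu>s n) (\<mu>s n) T' = \<mu>s n"
    unfolding T'_def[abs_def] using invariant_extension[OF T inv] by auto
  have "c' \<in> borel_measurable borel"
    unfolding c'_def[abs_def] using closed_X c(1) by (intro borel_measurable_continuous_on_if) auto
  then have c': "c' \<in> borel_measurable (\<mu>s n)"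
    using measurable_cong_sets[OF sets_\<mu>s[of n] refl[of "sets (borel::real measure)"]] by simp
  have iter: "((T' ^^ l) ^^ i) p = (T ^^ (i * l)) p \<and> (T ^^ (i * l)) p \<in> X" if "p \<in> X" for p i
  proof -
    have "(T' ^^ k) p = (T ^^ k) p \<and> (T ^^ k) p \<in> X" for k
      using that T(2) by (induction k) (auto simp: T'_def)
    then show ?thesis by (simp add: funpow_mult mult.commute)
  qed
  interpret prob_space "\<mu>s n" by (rule prob_\<mu>s)
  let ?bad = "\<lambda>m. {p \<in> space (\<mu>s n). exp (- a * real m) < (\<Prod>i<m. c' (((T' ^^ l) ^^ i) p))}"
  have "?bad m \<in> sets (\<mu>s n)" for m
    by (intro borel_measurable_less borel_measurable_const borel_measurable_prod
        measurable_compose[OF funpow_measurable[OF funpow_measurable[OF T'(1)]] c'])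
  then have "(\<Union>m. ?bad m) \<in> sets (\<mu>s n)" by blast
  moreover have "(\<Union>m. ?bad m)
      = {p \<in> space (\<mu>s n). \<exists>m. exp (- a * real m) < (\<Prod>i<m. c' (((T' ^^ l) ^^ i) p))}" by blast
  moreover have "{p \<in> X. \<exists>m. exp (- a * real m) < (\<Prod>i<m. c ((T ^^ (i * l)) p))} \<subseteq> (\<Union>m. ?bad m)"
    using iter by (auto simp: c'_def space_\<mu>s)
  ultimately have "measure (\<mu>s n) {p \<in> X. \<exists>m. exp (- a * real m) < (\<Prod>i<m. c ((T ^^ (i * l)) p))}
      \<le> measure (\<mu>s n) {p \<in> space (\<mu>s n). \<exists>m. exp (- a * real m) < (\<Prod>i<m. c' (((T' ^^ l) ^^ i) p))}"
    by (intro finite_measure_mono) auto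
  also have "\<dots> \<le> (1 + (ln C + a) / (b - a)) * measure (\<mu>s n) {p \<in> space (\<mu>s n). exp (- b) \<le> c' p}"
    using c(2) C ab
    by (intro measure_orbit_product_exceeds_le[OF prob_\<mu>s funpow_measurable[OF T'(1)]
          distr_funpow_eq[OF T'] c']) (auto simp: c'_def)
  also have "{p \<in> space (\<mu>s n). exp (- b) \<le> c' p} = {p \<in> X. exp (- b) \<le> c p}"
    using exp_gt_zero[of "- b"] by (auto simp: c'_def space_\<mu>s)
  finally show ?thesis .
qed

text \<open>The thresholds \<alpha> < \<beta>1 < \<beta>2 < \<beta> leave room both for the maximal inequality
  (\<alpha> versus \<beta>1) and for the passage to the weak* limit (\<beta>1 versus \<beta>2). The
  constant of the maximal inequality for the time-l map does not depend on l, since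
  ln (K^l) and the thresholds all scale with l.\<close>
lemma eventually_measure_block_violation_less:
  fixes T :: "'b \<Rightarrow> 'b" and c :: "nat \<Rightarrow> 'b \<Rightarrow> real"
  assumes T: "continuous_on X T" "T ` X \<subseteq> X"
    and inv: "\<And>n A. A \<in> sets borel \<Longrightarrow> emeasure (\<mu>s n) (T -` A \<inter> X) = emeasure (\<mu>s n) A"
    and c: "\<And>l. continuous_on X (c l)" "\<And>l p. p \<in> X \<Longrightarrow> 0 \<le> c l p \<and> c l p \<le> K ^ l"
    and K: "1 \<le> K"
    and lyap: "AE p in \<mu>. p \<in> X \<longrightarrow> (\<exists>L. L < - \<beta> \<and> (\<lambda>n. ln (c n p) / real n) \<longlonglongrightarrow> L)"
    and \<alpha>: "0 < \<alpha>" "\<alpha> < \<beta>" and \<epsilon>: "0 < \<epsilon>"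
  shows "\<forall>\<^sub>F l in sequentially. \<forall>\<^sub>F n in sequentially. measure (\<mu>s n) (block_violation T c X l \<alpha>) < \<epsilon>"
proof -
  define \<beta>1 where "\<beta>1 = (2 * \<alpha> + \<beta>) / 3"
  define \<beta>2 where "\<beta>2 = (\<alpha> + 2 * \<beta>) / 3"
  have \<beta>: "\<alpha> < \<beta>1" "\<beta>1 < \<beta>2" "\<beta>2 < \<beta>" using \<alpha> by (simp_all add: \<beta>1_def \<beta>2_def)
  define D where "D = 1 + (ln K + \<alpha>) / (\<beta>1 - \<alpha>)"
  have D: "1 \<le> D" using K \<alpha> \<beta> by (simp add: D_def)
  have "(\<lambda>l. measure \<mu> {p \<in> X. exp (- (\<beta>2 * real l)) < c l p}) \<longlonglongrightarrow> 0"
    by (rule measure_superlevel_tendsto_zero[OF c(1) lyap \<beta>(3)])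
  then have "\<forall>\<^sub>F l in sequentially. measure \<mu> {p \<in> X. exp (- (\<beta>2 * real l)) < c l p} < \<epsilon> / (2 * D)"
    by (rule order_tendstoD) (use \<epsilon> D in simp)
  then show ?thesis using eventually_gt_at_top[of 0]
  proof eventually_elim
    case (elim l)
    note small_limit = elim(1) and l_pos = elim(2)
    have "(ln (K ^ l) + \<alpha> * real l) / (\<beta>1 * real l - \<alpha> * real l)
        = (real l * (ln K + \<alpha>)) / (real l * (\<beta>1 - \<alpha>))"
      by (simp add: ln_realpow algebra_simps)
    then have D_l: "(ln (K ^ l) + \<alpha> * real l) / (\<beta>1 * real l - \<alpha> * real l) = D - 1"
      using l_pos by (simp add: D_def)
    have "exp (- (\<beta>2 * real l)) < exp (- (\<beta>1 * real l))" using \<beta> l_pos by simp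
    then have "\<forall>\<^sub>F n in sequentially. measure (\<mu>s n) {p \<in> X. exp (- (\<beta>1 * real l)) \<le> c l p}
        < measure \<mu> {p \<in> X. exp (- (\<beta>2 * real l)) < c l p} + \<epsilon> / (2 * D)"
      using \<epsilon> D by (intro eventually_measure_superlevel_less[OF c(1)]) simp_all
    then show ?case
    proof eventually_elim
      case (elim n)
      have "measure (\<mu>s n) {p \<in> X. \<exists>m. exp (- \<alpha> * real l * real m) < (\<Prod>i<m. c l ((T ^^ (i * l)) p))}
          \<le> D * measure (\<mu>s n) {p \<in> X. exp (- (\<beta>1 * real l)) \<le> c l p}"
        using measure_orbit_product_exceeds_le_on[OF T inv c(1)[of l] c(2)[of _ l],
            where a="\<alpha> * real l" and b="\<beta>1 * real l" and l=l]
          K \<alpha> \<beta> l_pos D_l by simp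
      also have "\<dots> < D * (\<epsilon> / D)" using elim small_limit D by (intro mult_strict_left_mono) simp_all
      finally show ?case using D by (simp add: block_violation_def)
    qed
  qed
qed

lemma tendsto_liminf_emeasure_diff_Un:
  assumes A: "\<And>l. A l \<in> sets borel" and B: "\<And>l. B l \<in> sets borel"
    and small: "\<And>\<epsilon>. 0 < \<epsilon> \<Longrightarrow> \<forall>\<^sub>F l in sequentially. \<forall>\<^sub>F n in sequentially.
      measure (\<mu>s n) (A l) < \<epsilon> \<and> measure (\<mu>s n) (B l) < \<epsilon>"
  shows "(\<lambda>l. liminf (\<lambda>n. emeasure (\<mu>s n) (X - (A l \<union> B l)))) \<longlonglongrightarrow> 1"
proof (rule tendsto_liminf_1)
  show "emeasure (\<mu>s n) (X - (A l \<union> B l)) \<le> 1" for l n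
    by (rule prob_space.emeasure_le_1[OF prob_\<mu>s])
  fix \<delta> :: real assume "0 < \<delta>"
  have "ennreal (1 - \<delta>) \<le> emeasure (\<mu>s n) (X - (A l \<union> B l))"
    if "measure (\<mu>s n) (A l) < \<delta> / 2 \<and> measure (\<mu>s n) (B l) < \<delta> / 2" for l n
  proof -
    have "ennreal (1 - \<delta>) \<le> ennreal (1 - measure (\<mu>s n) (A l) - measure (\<mu>s n) (B l))"
      using that by (intro ennreal_leI) linarith
    also have "\<dots> \<le> emeasure (\<mu>s n) (X - (A l \<union> B l))" by (rule emeasure_diff_Un_ge[OF A B])
    finally show ?thesis .
  qed
  then show "\<forall>\<^sub>F l in sequentially. \<forall>\<^sub>F n in sequentially. ennreal (1 - \<delta>) \<le> emeasure (\<mu>s n) (X - (A l \<union> B l))"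
    using small[of "\<delta> / 2"] \<open>0 < \<delta>\<close> by (auto elim!: eventually_mono)
qed

end

section \<open>The skew product\<close>

lemma compact_sequences_in:
  assumes "compact S"
  shows "compact {\<omega> :: int \<Rightarrow> 'w::metric_space. \<forall>i. \<omega> i \<in> S}"
proof -
  have "{\<omega> :: int \<Rightarrow> 'w. \<forall>i. \<omega> i \<in> S} = PiE UNIV (\<lambda>_. S)" by (auto simp: PiE_def Pi_def)
  moreover have "compactin (product_topology (\<lambda>_. euclidean) UNIV) (PiE UNIV (\<lambda>_::int. S))"
    using assms by (simp add: compactin_PiE compactin_euclidean_iff)
  ultimately show ?thesis by (simp add: euclidean_product_topology compactin_euclidean_iff)
qed

lemma continuous_on_coordinate: "continuous_on A (\<lambda>p. fst p i :: 'w::topological_space)"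
  by (rule continuous_on_compose2[OF continuous_on_product_coordinates continuous_on_fst]) auto

lemma continuous_on_skew:
  assumes "C1_family M fam U G G'"
  shows "continuous_on (UNIV \<times> M) (skew fam)"
proof -
  have "continuous_on (UNIV \<times> M) (\<lambda>p. comp_iter fam int (fst p) 1 (snd p))"
    by (rule C1_family.continuous_on_comp_iter[OF assms])
  then have "continuous_on (UNIV \<times> M) (\<lambda>p. (shift (fst p), fam (fst p 0) (snd p)))"
    by (intro continuous_on_Pair continuous_on_coordinatewise_then_product)
       (simp_all add: shift_def continuous_on_coordinate)
  then show ?thesis unfolding skew_def[abs_def] .
qed

lemma continuous_on_skew_inv:
  assumes "C1_family M (\<lambda>w. inv_into M (fam w)) U G G'"
  shows "continuous_on (UNIV \<times> M) (skew_inv M fam)"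
proof -
  have "continuous_on (UNIV \<times> M)
      (\<lambda>p. comp_iter (\<lambda>w. inv_into M (fam w)) (\<lambda>i. - int (Suc i)) (fst p) 1 (snd p))"
    by (rule C1_family.continuous_on_comp_iter[OF assms])
  then have "continuous_on (UNIV \<times> M) (\<lambda>p. (shift_inv (fst p), inv_into M (fam (fst p (-1))) (snd p)))"
    by (intro continuous_on_Pair continuous_on_coordinatewise_then_product)
       (simp_all add: shift_inv_def continuous_on_coordinate)
  then show ?thesis unfolding skew_inv_def[abs_def] .
qed

lemma direct_sum_tangent_subspaces:
  assumes "direct_sum_tangent M x E1 E2"
  shows "subspace E1" "E1 \<subseteq> tangent_space M x" "subspace E2" "E2 \<subseteq> tangent_space M x"
proof -
  have E: "subspace E1" "subspace E2" "{u + v | u v. u \<in> E1 \<and> v \<in> E2} = tangent_space M x"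
    using assms unfolding direct_sum_tangent_def by auto
  show "subspace E1" "subspace E2" using E by auto
  show "E1 \<subseteq> tangent_space M x"
  proof
    fix v assume "v \<in> E1"
    then have "v + 0 \<in> {u + v | u v. u \<in> E1 \<and> v \<in> E2}" using subspace_0[OF E(2)] by blast
    then show "v \<in> tangent_space M x" using E(3) by simp
  qed
  show "E2 \<subseteq> tangent_space M x"
  proof
    fix v assume "v \<in> E2"
    then have "0 + v \<in> {u + v | u v. u \<in> E1 \<and> v \<in> E2}" using subspace_0[OF E(1)] by blast
    then show "v \<in> tangent_space M x" using E(3) by simp
  qed
qed

lemma C2_continuous_family_imp_C1_family:
  assumes fam: "C2_continuous_family M h" and maps: "\<And>w y. y \<in> M \<Longrightarrow> h w y \<in> M"
  obtains U G G' where "C1_family M h U G G'"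
proof -
  obtain U G G' G'' where "M \<subseteq> U"
    and "\<forall>w y. y \<in> U \<longrightarrow> (G w has_derivative blinfun_apply (G' w y)) (at y) \<and>
                      (G' w has_derivative blinfun_apply (G'' w y)) (at y)"
    and "continuous_on (UNIV \<times> U) (\<lambda>(w, y). G w y)" "continuous_on (UNIV \<times> U) (\<lambda>(w, y). G' w y)"
    and "\<forall>w. \<forall>y\<in>M. G w y = h w y"
    using fam unfolding C2_continuous_family_def by blast
  then have "C1_family M h U G G'" using maps by unfold_locales auto
  then show ?thesis by (rule that)
qed

lemma (in C1_family) eventually_measure_block_violation_cocycle_less:
  fixes S :: "'w set" and idx :: "nat \<Rightarrow> int"
  assumes ws: "weak_star_on_closed X \<mu>s \<mu>" and X: "X \<subseteq> {\<omega>. \<forall>i. \<omega> i \<in> S} \<times> M"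
    and S: "compact S" and M: "compact M"
    and T: "continuous_on X T" "T ` X \<subseteq> X"
    and inv: "\<And>n A. A \<in> sets borel \<Longrightarrow> emeasure (\<mu>s n) (T -` A \<inter> X) = emeasure (\<mu>s n) A"
    and E: "\<And>p. p \<in> X \<Longrightarrow> subspace (E p) \<and> E p \<subseteq> tangent_space M (snd p)"
      "\<And>v. continuous_on X (\<lambda>p. orth_proj (E p) v)"
    and lyap: "AE p in \<mu>. p \<in> X \<longrightarrow>
      (\<exists>L. L < - \<beta> \<and> (\<lambda>n. ln (cocycle_norm M h idx E n p) / real n) \<longlonglongrightarrow> L)"
    and \<alpha>: "0 < \<alpha>" "\<alpha> < \<beta>" and \<epsilon>: "0 < \<epsilon>"
  shows "\<forall>\<^sub>F l in sequentially. \<forall>\<^sub>F n in sequentially.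
           measure (\<mu>s n) (block_violation T (cocycle_norm M h idx E) X l \<alpha>) < \<epsilon>"
proof -
  obtain K where K: "1 \<le> K"
    "\<And>E n p. (\<And>i. fst p (idx i) \<in> S) \<Longrightarrow> snd p \<in> M \<Longrightarrow> subspace (E p) \<Longrightarrow>
       E p \<subseteq> tangent_space M (snd p) \<Longrightarrow> cocycle_norm M h idx E n p \<le> K ^ n"
    using cocycle_norm_bound[OF S M] by metis
  have X': "X \<subseteq> UNIV \<times> M" using X by auto
  show ?thesis
  proof (rule weak_star_on_closed.eventually_measure_block_violation_less[OF ws T inv _ _ K(1) lyap \<alpha> \<epsilon>])
    show "continuous_on X (cocycle_norm M h idx E l)" for l
      by (rule continuous_on_cocycle_norm[OF X' E])
    show "0 \<le> cocycle_norm M h idx E l p \<and> cocycle_norm M h idx E l p \<le> K ^ l" if "p \<in> X" for l p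
      using that X E(1)[OF that] by (auto intro!: cocycle_norm_nonneg K(2))
  qed
qed

locale skew_product =
  fixes M :: "'a::euclidean_space set" and fam :: "'w::metric_space \<Rightarrow> 'a \<Rightarrow> 'a"
    and \<omega>f :: 'w and \<theta> :: "real \<Rightarrow> 'w measure" and \<epsilon>0 :: real
    and Ecu Ecs :: "(int \<Rightarrow> 'w) \<Rightarrow> 'a \<Rightarrow> 'a set"
  assumes compact_M: "compact M" and rrp: "regular_random_perturbation M fam \<omega>f \<theta>" and \<epsilon>0: "0 < \<epsilon>0"
    and split: "invariant_splitting M fam (Omega \<theta> \<epsilon>0 \<times> M) Ecu Ecs"
begin

abbreviation phase_space :: "((int \<Rightarrow> 'w) \<times> 'a) set" where
  "phase_space \<equiv> Omega \<theta> \<epsilon>0 \<times> M"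

text \<open>The two factors of the block condition: norm_cs l (\<omega>, x) is the norm of Df^l_\<omega> on
  E^cs(\<omega>, x), and norm_cu l (\<omega>, x) that of Df^-l_\<omega> on E^cu(\<omega>, x), which uses the symbols
  \<omega>(-1), \<omega>(-2), ... in this order.\<close>
abbreviation norm_cs :: "nat \<Rightarrow> (int \<Rightarrow> 'w) \<times> 'a \<Rightarrow> real" where
  "norm_cs \<equiv> cocycle_norm M fam int (\<lambda>p. Ecs (fst p) (snd p))"

abbreviation norm_cu :: "nat \<Rightarrow> (int \<Rightarrow> 'w) \<times> 'a \<Rightarrow> real" where
  "norm_cu \<equiv> cocycle_norm M (\<lambda>w. inv_into M (fam w)) (\<lambda>i. - int (Suc i)) (\<lambda>p. Ecu (fst p) (snd p))"

lemma bij_fam: "bij_betw (fam w) M M"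
  using rrp by (auto simp: regular_random_perturbation_def C2_diffeo_def)

lemma C1_families:
  obtains U G G' Ui Gi Gi' where "C1_family M fam U G G'"
    "C1_family M (\<lambda>w. inv_into M (fam w)) Ui Gi Gi'"
proof -
  have "C2_continuous_family M fam" "C2_continuous_family M (\<lambda>w. inv_into M (fam w))"
    using rrp by (auto simp: regular_random_perturbation_def)
  then show ?thesis
    using C2_continuous_family_imp_C1_family bij_fam that by (metis bij_betw_apply bij_betw_def inv_into_into)
qed

lemma compact_support: "compact (msupport (\<theta> \<epsilon>0))"
  using rrp \<epsilon>0 unfolding regular_random_perturbation_def by (elim conjE) simp

lemma phase_space_eq: "phase_space = {\<omega>. \<forall>i. \<omega> i \<in> msupport (\<theta> \<epsilon>0)} \<times> M"
  by (simp only: Omega_def)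

lemma closed_phase_space: "closed phase_space"
  unfolding phase_space_eq
  by (intro compact_imp_closed compact_Times compact_sequences_in compact_support compact_M)

lemma skew_in: "p \<in> phase_space \<Longrightarrow> skew fam p \<in> phase_space"
  by (auto simp: Omega_def skew_def shift_def intro: bij_betw_apply[OF bij_fam])

lemma skew_inv_in: "p \<in> phase_space \<Longrightarrow> skew_inv M fam p \<in> phase_space"
  using bij_fam by (auto simp: Omega_def skew_inv_def shift_inv_def bij_betw_def inv_into_into)

lemma skew_inv_skew: "p \<in> phase_space \<Longrightarrow> skew_inv M fam (skew fam p) = p"
  using bij_fam by (auto simp: skew_def skew_inv_def shift_def shift_inv_def bij_betw_def)

lemma splitting_subspaces:
  assumes "p \<in> phase_space"
  shows "subspace (Ecs (fst p) (snd p)) \<and> Ecs (fst p) (snd p) \<subseteq> tangent_space M (snd p)"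
    and "subspace (Ecu (fst p) (snd p)) \<and> Ecu (fst p) (snd p) \<subseteq> tangent_space M (snd p)"
proof -
  have "direct_sum_tangent M (snd p) (Ecu (fst p) (snd p)) (Ecs (fst p) (snd p))"
    using split assms unfolding invariant_splitting_def by (cases p) auto
  then show "subspace (Ecs (fst p) (snd p)) \<and> Ecs (fst p) (snd p) \<subseteq> tangent_space M (snd p)"
    and "subspace (Ecu (fst p) (snd p)) \<and> Ecu (fst p) (snd p) \<subseteq> tangent_space M (snd p)"
    by (auto dest: direct_sum_tangent_subspaces)
qed

lemma splitting_continuous_proj:
  shows "continuous_on phase_space (\<lambda>p. orth_proj (Ecs (fst p) (snd p)) v)"
    and "continuous_on phase_space (\<lambda>p. orth_proj (Ecu (fst p) (snd p)) v)"
  using split unfolding invariant_splitting_def by (simp_all add: case_prod_beta')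

lemma hyp_block_eq_diff_block_violation:
  "hyp_block M fam phase_space Ecu Ecs l \<alpha> = phase_space -
     (block_violation (skew fam) norm_cs phase_space l \<alpha> \<union>
      block_violation (skew_inv M fam) norm_cu phase_space l \<alpha>)"
  unfolding hyp_block_def block_violation_def cocycle_norm_def Let_def fwd_eq_comp_iter bwd_eq_comp_iter
  by (simp add: set_eq_iff not_less all_conj_distrib) blast

lemma
  shows continuous_on_skew_phase_space: "continuous_on phase_space (skew fam)"
    and continuous_on_skew_inv_phase_space: "continuous_on phase_space (skew_inv M fam)"
    and continuous_on_norm_cs: "continuous_on phase_space (norm_cs l)"
    and continuous_on_norm_cu: "continuous_on phase_space (norm_cu l)"
proof -
  obtain U G G' Ui Gi Gi' where fwd: "C1_family M fam U G G'"
    and bwd: "C1_family M (\<lambda>w. inv_into M (fam w)) Ui Gi Gi'" by (rule C1_families)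
  have sub: "phase_space \<subseteq> UNIV \<times> M" by auto
  show "continuous_on phase_space (skew fam)"
    by (rule continuous_on_subset[OF continuous_on_skew[OF fwd] sub])
  show "continuous_on phase_space (skew_inv M fam)"
    by (rule continuous_on_subset[OF continuous_on_skew_inv[OF bwd] sub])
  show "continuous_on phase_space (norm_cs l)" "continuous_on phase_space (norm_cu l)"
    using splitting_subspaces splitting_continuous_proj
    by (intro C1_family.continuous_on_cocycle_norm[OF fwd sub] C1_family.continuous_on_cocycle_norm[OF bwd sub];
        blast)+
qed

lemma sets_block_violations:
  "block_violation (skew fam) norm_cs phase_space l \<alpha> \<in> sets borel"
  "block_violation (skew_inv M fam) norm_cu phase_space l \<alpha> \<in> sets borel"
  using skew_in skew_inv_in
  by (intro sets_block_violation closed_phase_space continuous_on_skew_phase_space image_subsetI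
      continuous_on_skew_inv_phase_space continuous_on_norm_cs continuous_on_norm_cu; blast)+

lemma eventually_measure_block_violations_less:
  assumes ws: "weak_star_on_closed phase_space \<mu>s \<mu>"
    and inv: "\<And>n A. A \<in> sets borel \<Longrightarrow> emeasure (\<mu>s n) (skew fam -` A \<inter> phase_space) = emeasure (\<mu>s n) A"
    and lyap: "AE p in \<mu>. p \<in> phase_space \<longrightarrow>
        (\<exists>L. L < - \<beta> \<and> (\<lambda>n. ln (opnorm_on (tmap M (fwd fam (fst p) n) (snd p))
                                   (Ecs (fst p) (snd p))) / real n) \<longlonglongrightarrow> L) \<and>
        (\<exists>L. L < - \<beta> \<and> (\<lambda>n. ln (opnorm_on (tmap M (bwd M fam (fst p) n) (snd p))
                                   (Ecu (fst p) (snd p))) / real n) \<longlonglongrightarrow> L)"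
    and \<alpha>: "0 < \<alpha>" "\<alpha> < \<beta>" and \<epsilon>: "0 < \<epsilon>"
  shows "\<forall>\<^sub>F l in sequentially. \<forall>\<^sub>F n in sequentially.
      measure (\<mu>s n) (block_violation (skew fam) norm_cs phase_space l \<alpha>) < \<epsilon> \<and>
      measure (\<mu>s n) (block_violation (skew_inv M fam) norm_cu phase_space l \<alpha>) < \<epsilon>"
proof -
  obtain U G G' Ui Gi Gi' where fwd: "C1_family M fam U G G'"
    and bwd: "C1_family M (\<lambda>w. inv_into M (fam w)) Ui Gi Gi'" by (rule C1_families)
  note X = equalityD1[OF phase_space_eq]
  have inv_skew_inv: "emeasure (\<mu>s n) (skew_inv M fam -` A \<inter> phase_space) = emeasure (\<mu>s n) A"
    if "A \<in> sets borel" for n A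
    using skew_inv_skew inv that skew_in
    by (intro weak_star_on_closed.invariant_left_inverse[OF ws continuous_on_skew_inv_phase_space]) blast+
  have lyap_cs: "AE p in \<mu>. p \<in> phase_space \<longrightarrow>
      (\<exists>L. L < - \<beta> \<and> (\<lambda>n. ln (norm_cs n p) / real n) \<longlonglongrightarrow> L)"
    using lyap by eventually_elim (simp add: cocycle_norm_def fwd_eq_comp_iter)
  have lyap_cu: "AE p in \<mu>. p \<in> phase_space \<longrightarrow>
      (\<exists>L. L < - \<beta> \<and> (\<lambda>n. ln (norm_cu n p) / real n) \<longlonglongrightarrow> L)"
    using lyap by eventually_elim (simp add: cocycle_norm_def bwd_eq_comp_iter)
  have "\<forall>\<^sub>F l in sequentially. \<forall>\<^sub>F n in sequentially.
      measure (\<mu>s n) (block_violation (skew fam) norm_cs phase_space l \<alpha>) < \<epsilon>"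
    using skew_in splitting_subspaces(1) splitting_continuous_proj(1)
    by (intro C1_family.eventually_measure_block_violation_cocycle_less[OF fwd ws X compact_support
          compact_M continuous_on_skew_phase_space _ inv _ _ lyap_cs \<alpha> \<epsilon>]) blast+
  moreover have "\<forall>\<^sub>F l in sequentially. \<forall>\<^sub>F n in sequentially.
      measure (\<mu>s n) (block_violation (skew_inv M fam) norm_cu phase_space l \<alpha>) < \<epsilon>"
    using skew_inv_in splitting_subspaces(2) splitting_continuous_proj(2)
    by (intro C1_family.eventually_measure_block_violation_cocycle_less[OF bwd ws X compact_support
          compact_M continuous_on_skew_inv_phase_space _ inv_skew_inv _ _ lyap_cu \<alpha> \<epsilon>]) blast+
  ultimately show ?thesis by eventually_elim (rule eventually_conj)
qed

end

theorem theorem4p2: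
  fixes M :: "'a::euclidean_space set"
    and fam :: "'w::metric_space \<Rightarrow> 'a \<Rightarrow> 'a"
    and \<omega>f :: 'w
    and \<theta> :: "real \<Rightarrow> 'w measure"
    and \<epsilon>0 :: real
    and Ecu Ecs :: "(int \<Rightarrow> 'w) \<Rightarrow> 'a \<Rightarrow> 'a set"
    and \<alpha> \<beta> :: real
    and \<mu>s :: "nat \<Rightarrow> ((int \<Rightarrow> 'w) \<times> 'a) measure"
    and \<mu> :: "((int \<Rightarrow> 'w) \<times> 'a) measure"
  assumes M: "compact M" "C2_submanifold M"
    and rrp: "regular_random_perturbation M fam \<omega>f \<theta>"
    and dom: "\<exists>Fcu Fcs. dominated_splitting M (fam \<omega>f) Fcu Fcs"
    and eps0: "\<epsilon>0 > 0"
    and split: "invariant_splitting M fam (Omega \<theta> \<epsilon>0 \<times> M) Ecu Ecs"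
    and ab: "0 < \<alpha>" "\<alpha> < \<beta>"
    and mus_prob: "\<And>n. prob_space (\<mu>s n)" "\<And>n. sets (\<mu>s n) = sets borel"
    and mus_supp: "\<And>n. emeasure (\<mu>s n) (Omega \<theta> \<epsilon>0 \<times> M) = 1"
    and mus_inv: "\<And>n A. A \<in> sets borel \<Longrightarrow>
        emeasure (\<mu>s n) (skew fam -` A \<inter> (Omega \<theta> \<epsilon>0 \<times> M)) = emeasure (\<mu>s n) A"
    and mu_prob: "prob_space \<mu>" "sets \<mu> = sets borel"
    and mu_supp: "emeasure \<mu> (Omega \<theta> \<epsilon>0 \<times> M) = 1"
    and conv: "weak_star_conv \<mu>s \<mu>"
    and lyap: "AE p in \<mu>. p \<in> Omega \<theta> \<epsilon>0 \<times> M \<longrightarrow>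
        (\<exists>L. L < - \<beta> \<and> (\<lambda>n. ln (opnorm_on (tmap M (fwd fam (fst p) n) (snd p))
                                   (Ecs (fst p) (snd p))) / real n) \<longlonglongrightarrow> L) \<and>
        (\<exists>L. L < - \<beta> \<and> (\<lambda>n. ln (opnorm_on (tmap M (bwd M fam (fst p) n) (snd p))
                                   (Ecu (fst p) (snd p))) / real n) \<longlonglongrightarrow> L)"
  shows "(\<lambda>l. liminf (\<lambda>n. emeasure (\<mu>s n) (hyp_block M fam (Omega \<theta> \<epsilon>0 \<times> M) Ecu Ecs l \<alpha>)))
           \<longlonglongrightarrow> 1"
proof -
  interpret skew_product M fam \<omega>f \<theta> \<epsilon>0 Ecu Ecs
    using M(1) rrp eps0 split by unfold_locales
  have ws: "weak_star_on_closed phase_space \<mu>s \<mu>"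
    using closed_phase_space mus_prob mus_supp mu_prob mu_supp conv by (intro weak_star_on_closed.intro)
  show ?thesis
    unfolding hyp_block_eq_diff_block_violation
    using eventually_measure_block_violations_less[OF ws mus_inv lyap ab]
    by (intro weak_star_on_closed.tendsto_liminf_emeasure_diff_Un[OF ws] sets_block_violations) auto
qed

end
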